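(* Let $\sigma>0$, $\rho_0\in(0,1)$ and $\rho_1>0$ with $\rho_0\rho_1<1$. Consider random Motzkin paths $(\gamma^{(L)}_0,\dots,\gamma^{(L)}_L)$ sampled from $\Pr_L$ with boundary weights $\alpha_n=\rho_0^n$, $\beta_n=\rho_1^n$ ($n\ge0$), and set $\gamma^{(L)}_k=0$ for $k>L$. Let $\hat\rho=\max\{1,\rho_1\}$. Then, as $L\to\infty$, $\{\gamma^{(L)}_k\}_{k\ge0}\Rightarrow\{Z_k\}_{k\ge0}$ in the sense of finite-dimensional distributions, where $\{Z_k\}$ is a Markov chain with transition probabilities $\mathsf Q^{(\hat\rho)}_{n,m}$ and $Z_0=G+\widetilde G$, with $G,\widetilde G$ independent, $\Pr(G=n)=(1-\rho_0\hat\rho)(\rho_0\hat\rho)^n$ and $\Pr(\widetilde G=n)=(1-\rho_0/\hat\rho)(\rho_0/\hat\rho)^n$, $n\ge0$.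
   Context: A Motzkin path of length $L\ge1$ is a sequence $(\gamma_0,\dots,\gamma_L)$ of non-negative integers with $|\gamma_k-\gamma_{k-1}|\le1$; $\mathcal M^{(L)}$ is the set of all such paths. Weight: $w(\vec\gamma)=\sigma^{\#\{k:\gamma_k=\gamma_{k-1}\}}$. Probability: $\Pr_L(\vec\gamma)=\alpha_{\gamma_0}\beta_{\gamma_L}w(\vec\gamma)/\sum_{\vec\eta\in\mathcal M^{(L)}}\alpha_{\eta_0}\beta_{\eta_L}w(\vec\eta)$. Transition kernels: for $\rho>1$, $$\mathsf Q^{(\rho)}_{n,m}=\frac{1}{\rho+1/\rho+\sigma}\begin{cases}\frac{\rho^{n+2}-\rho^{-(n+2)}}{\rho^{n+1}-\rho^{-(n+1)}}, & m=n+1,\\ \sigma, & m=n,\\ \frac{\rho^{n}-\rho^{-n}}{\rho^{n+1}-\rho^{-(n+1)}}, & m=n-1,\\ 0,&\text{otherwise},\end{cases}$$ and $\mathsf Q^{(1)}_{n,m}$ equals $\frac{1}{2+\sigma}\frac{n+2}{n+1}$ if $m=n+1$, $\frac{\sigma}{2+\sigma}$ if $m=n$, $\frac{1}{2+\sigma}\frac{n}{n+1}$ if $m=n-1\ge0$, and $0$ otherwise. *)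

theory Defs
  imports "HOL-Analysis.Analysis"
begin

definition motzkin_paths :: "nat \<Rightarrow> nat list set" where
  "motzkin_paths L = {g. length g = Suc L \<and>
     (\<forall>k\<in>{1..L}. \<bar>int (g ! k) - int (g ! (k - 1))\<bar> \<le> 1)}"

definition flat_steps :: "nat list \<Rightarrow> nat" where
  "flat_steps g = card {k. 1 \<le> k \<and> k < length g \<and> g ! k = g ! (k - 1)}"

definition path_weight :: "real \<Rightarrow> (nat \<Rightarrow> real) \<Rightarrow> (nat \<Rightarrow> real) \<Rightarrow> nat list \<Rightarrow> real" where
  "path_weight \<sigma> \<alpha> \<beta> g = \<alpha> (g ! 0) * \<beta> (g ! (length g - 1)) * \<sigma> ^ flat_steps g"

definition PrL :: "real \<Rightarrow> (nat \<Rightarrow> real) \<Rightarrow> (nat \<Rightarrow> real) \<Rightarrow> nat \<Rightarrow> nat list set \<Rightarrow> real" where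
  "PrL \<sigma> \<alpha> \<beta> L A =
     (\<Sum>\<^sub>\<infinity>g\<in>motzkin_paths L \<inter> A. path_weight \<sigma> \<alpha> \<beta> g) /
     (\<Sum>\<^sub>\<infinity>g\<in>motzkin_paths L. path_weight \<sigma> \<alpha> \<beta> g)"

definition gam :: "nat list \<Rightarrow> nat \<Rightarrow> nat" where
  "gam g k = (if k < length g then g ! k else 0)"

definition Qker :: "real \<Rightarrow> real \<Rightarrow> nat \<Rightarrow> nat \<Rightarrow> real" where
  "Qker \<sigma> \<rho> n m =
    (if \<rho> = 1 then
       (if m = Suc n then (real n + 2) / (real n + 1) / (2 + \<sigma>)
        else if m = n then \<sigma> / (2 + \<sigma>)
        else if Suc m = n then real n / (real n + 1) / (2 + \<sigma>)
        else 0)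
     else
       (if m = Suc n then (\<rho> ^ (n + 2) - \<rho> powi -(int n + 2)) / (\<rho> ^ (n + 1) - \<rho> powi -(int n + 1))
              / (\<rho> + 1 / \<rho> + \<sigma>)
        else if m = n then \<sigma> / (\<rho> + 1 / \<rho> + \<sigma>)
        else if Suc m = n then (\<rho> ^ n - \<rho> powi -(int n)) / (\<rho> ^ (n + 1) - \<rho> powi -(int n + 1))
              / (\<rho> + 1 / \<rho> + \<sigma>)
        else 0))"

definition geom :: "real \<Rightarrow> nat \<Rightarrow> real" where
  "geom q n = (1 - q) * q ^ n"

text \<open>Law of G + G' for independent geometric G (parameter q1) and G' (parameter q2).\<close>
definition sum_geom_law :: "real \<Rightarrow> real \<Rightarrow> nat \<Rightarrow> real" where
  "sum_geom_law q1 q2 n = (\<Sum>j\<le>n. geom q1 j * geom q2 (n - j))"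

end

theory Submission
  imports Defs
begin

text \<open>
  Fix a prefix \<open>n\<^sub>0, \<dots>, n\<^sub>K\<close>. The total weight of the paths of length \<open>L\<close> that start with it
  factorises as \<open>\<rho>0^n\<^sub>0 \<sqdot> \<Prod> T(n\<^sub>i, n\<^sub>i\<^sub>+\<^sub>1) \<sqdot> (T^(L-K) \<beta>)(n\<^sub>K)\<close>, where \<open>T\<close> is the tridiagonal
  transfer matrix of Motzkin steps on \<nat> (\<open>\<sigma>\<close> on the diagonal, \<open>1\<close> next to it) and
  \<open>\<beta> n = \<rho>1^n\<close>; the partition function is \<open>\<Sum> \<rho>0^n (T^L \<beta>)(n)\<close>. Everything therefore
  reduces to the growth of \<open>T^L \<beta>\<close>. With \<open>\<rho> = max 1 \<rho>1\<close>, let \<open>h\<close> be the positive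
  eigenvector of \<open>T\<close> for the eigenvalue \<open>\<lambda> = \<rho> + 1/\<rho> + \<sigma>\<close>. If \<open>(T^L \<beta>)(n) \<sim> \<kappa> c\<^sub>L h(n)\<close>,
  dominated uniformly in \<open>n\<close>, with \<open>c\<^sub>L\<^sub>+\<^sub>1 / c\<^sub>L \<rightarrow> \<lambda>\<close>, the prefix probabilities converge to
  \<open>\<rho>0^n\<^sub>0 h(n\<^sub>0) / (\<Sum> \<rho>0^k h(k)) \<sqdot> \<Prod> T(n\<^sub>i, n\<^sub>i\<^sub>+\<^sub>1) h(n\<^sub>i\<^sub>+\<^sub>1) / (\<lambda> h(n\<^sub>i))\<close>: the law of
  \<open>G + G'\<close> followed by the Doob \<open>h\<close>-transform of \<open>T\<close>, which is \<open>Q\<close>.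

  For \<open>\<rho>1 > 1\<close> the weight \<open>\<beta>\<close> is a multiple of \<open>h\<close> plus a remainder of strictly smaller
  growth rate. For \<open>\<rho>1 \<le> 1\<close> the sine transform diagonalises \<open>T\<close>, so \<open>T^L \<beta>\<close> becomes an
  integral of \<open>(\<sigma> + 2 cos \<theta>)^L\<close> over \<open>[0, \<pi>]\<close>, and Laplace's method concentrates it at \<open>\<theta> = 0\<close>.
\<close>

section \<open>The transfer operator\<close>

definition step_weight :: "real \<Rightarrow> nat \<Rightarrow> nat \<Rightarrow> real" where
  "step_weight \<sigma> n m = (if m = Suc n \<or> Suc m = n then 1 else if m = n then \<sigma> else 0)"

text \<open>\<open>transfer_pow \<sigma> b L\<close> is \<open>T^L b\<close> for the matrix \<open>T n m = step_weight \<sigma> n m\<close> on \<nat>.\<close>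

fun transfer_pow :: "real \<Rightarrow> (nat \<Rightarrow> real) \<Rightarrow> nat \<Rightarrow> nat \<Rightarrow> real" where
  "transfer_pow \<sigma> b 0 n = b n"
| "transfer_pow \<sigma> b (Suc L) n =
     \<sigma> * transfer_pow \<sigma> b L n + transfer_pow \<sigma> b L (Suc n) +
     (if n = 0 then 0 else transfer_pow \<sigma> b L (n - 1))"

lemma transfer_pow_nonneg: "\<sigma> \<ge> 0 \<Longrightarrow> (\<And>n. b n \<ge> 0) \<Longrightarrow> transfer_pow \<sigma> b L n \<ge> 0"
  by (induction L arbitrary: n) auto

lemma transfer_pow_add:
  "transfer_pow \<sigma> (\<lambda>n. f n + g n) L n = transfer_pow \<sigma> f L n + transfer_pow \<sigma> g L n"
  by (induction L arbitrary: n) (simp_all add: algebra_simps)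

lemma transfer_pow_cmult: "transfer_pow \<sigma> (\<lambda>n. x * f n) L n = x * transfer_pow \<sigma> f L n"
  by (induction L arbitrary: n) (simp_all add: algebra_simps)

lemma transfer_pow_mono:
  "\<sigma> \<ge> 0 \<Longrightarrow> (\<And>n. f n \<le> g n) \<Longrightarrow> transfer_pow \<sigma> f L n \<le> transfer_pow \<sigma> g L n"
  by (induction L arbitrary: n) (auto intro!: add_mono mult_left_mono)

lemma transfer_pow_power_le:
  assumes "s > 0" "\<sigma> \<ge> 0"
  shows "transfer_pow \<sigma> (\<lambda>n. s ^ n) L n \<le> (s + 1 / s + \<sigma>) ^ L * s ^ n"
proof (induction L arbitrary: n)
  case (Suc L)
  let ?\<mu> = "s + 1 / s + \<sigma>"
  have "\<sigma> * transfer_pow \<sigma> (\<lambda>n. s ^ n) L n \<le> \<sigma> * (?\<mu> ^ L * s ^ n)"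
    using Suc.IH assms by (intro mult_left_mono) auto
  moreover have "(if n = 0 then 0 else transfer_pow \<sigma> (\<lambda>n. s ^ n) L (n - 1)) \<le> ?\<mu> ^ L * s ^ n / s"
    using Suc.IH[of "n - 1"] assms by (cases n) (auto simp: field_simps)
  ultimately have "transfer_pow \<sigma> (\<lambda>n. s ^ n) (Suc L) n \<le>
      \<sigma> * (?\<mu> ^ L * s ^ n) + ?\<mu> ^ L * s ^ Suc n + ?\<mu> ^ L * s ^ n / s"
    using Suc.IH[of "Suc n"] by simp
  also have "\<dots> = ?\<mu> ^ Suc L * s ^ n"
    using assms by (simp add: field_simps)
  finally show ?case .
qed simp

lemma transfer_pow_sums:
  assumes "\<And>n. (\<lambda>m. B m n) sums b n"
  shows "(\<lambda>m. transfer_pow \<sigma> (B m) L n) sums transfer_pow \<sigma> b L n"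
proof (induction L arbitrary: n)
  case (Suc L)
  then show ?case
    by (cases "n = 0") (simp_all add: sums_add sums_mult)
qed (simp add: assms)

text \<open>With truncated subtraction, \<open>{n - 1..Suc n}\<close> is the set of neighbours of \<open>n\<close> in \<nat>.\<close>

lemma transfer_pow_Suc_eq_sum:
  "transfer_pow \<sigma> b (Suc L) n = (\<Sum>m\<in>{n - 1..Suc n}. step_weight \<sigma> n m * transfer_pow \<sigma> b L m)"
proof (cases n)
  case 0
  then have "{n - 1..Suc n} = {0, 1}" by auto
  with 0 show ?thesis by (simp add: step_weight_def)
next
  case (Suc k)
  then have "{n - 1..Suc n} = {k, Suc k, Suc (Suc k)}" by auto
  with Suc show ?thesis by (simp add: step_weight_def algebra_simps)
qed

section \<open>Motzkin paths with a prescribed beginning\<close>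

lemma motzkin_paths_0: "motzkin_paths 0 = range (\<lambda>x. [x])"
  unfolding motzkin_paths_def by (auto simp: length_Suc_conv)

lemma motzkin_paths_Suc_iff:
  "g \<in> motzkin_paths (Suc L) \<longleftrightarrow>
     (\<exists>x g'. g = x # g' \<and> g' \<in> motzkin_paths L \<and> \<bar>int x - int (g' ! 0)\<bar> \<le> 1)"
proof -
  have steps: "{1..Suc L} = insert 1 (Suc ` {1..L})"
    by (auto simp: image_iff intro: bexI[of _ "_ - 1"])
  have step: "(\<forall>k\<in>{1..Suc L}. \<bar>int ((x # g') ! k) - int ((x # g') ! (k - 1))\<bar> \<le> 1) \<longleftrightarrow>
      \<bar>int x - int (g' ! 0)\<bar> \<le> 1 \<and> (\<forall>k\<in>{1..L}. \<bar>int (g' ! k) - int (g' ! (k - 1))\<bar> \<le> 1)"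
    for x g' unfolding steps by (simp add: abs_minus_commute del: image_Suc_atLeastAtMost)
  show ?thesis
  proof (cases g)
    case (Cons x g')
    show ?thesis unfolding motzkin_paths_def Cons by (simp only: mem_Collect_eq step) auto
  qed (simp add: motzkin_paths_def)
qed

lemma motzkin_paths_nonempty: "g \<in> motzkin_paths L \<Longrightarrow> g \<noteq> []"
  unfolding motzkin_paths_def by auto

lemma flat_steps_Cons:
  assumes "g \<noteq> []"
  shows "flat_steps (x # g) = (if x = g ! 0 then 1 else 0) + flat_steps g"
proof -
  let ?F = "\<lambda>g. {k. 1 \<le> k \<and> k < length g \<and> g ! k = g ! (k - 1)}"
  have F_Cons: "?F (x # g) = (if x = g ! 0 then {1} else {}) \<union> Suc ` ?F g"
  proof (rule set_eqI)
    fix k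
    show "k \<in> ?F (x # g) \<longleftrightarrow> k \<in> (if x = g ! 0 then {1} else {}) \<union> Suc ` ?F g"
    proof (cases k)
      case (Suc j)
      with assms show ?thesis by (cases j) (simp_all add: inj_image_mem_iff)
    qed simp
  qed
  have "finite (?F g)" by (rule finite_subset[of _ "{..<length g}"]) auto
  moreover have "1 \<notin> Suc ` ?F g" by auto
  ultimately show ?thesis
    unfolding flat_steps_def F_Cons by (simp add: card_image)
qed

lemma abs_diff_le_one_iff: "\<bar>int n - int m\<bar> \<le> 1 \<longleftrightarrow> m \<in> {n - 1..Suc n}"
  by auto

definition paths_from :: "nat \<Rightarrow> nat \<Rightarrow> nat list set" where
  "paths_from L n = {g \<in> motzkin_paths L. g ! 0 = n}"

lemma paths_from_0: "paths_from 0 n = {[n]}"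
  unfolding paths_from_def motzkin_paths_0 by auto

lemma paths_from_Suc:
  "paths_from (Suc L) n = (\<lambda>(m, g). n # g) ` Sigma {n - 1..Suc n} (paths_from L)"
  unfolding paths_from_def motzkin_paths_Suc_iff abs_diff_le_one_iff by (auto simp: image_iff)

lemma finite_paths_from: "finite (paths_from L n)"
  by (induction L arbitrary: n) (simp_all add: paths_from_0 paths_from_Suc)

lemma path_weight_nonneg:
  "\<sigma> \<ge> 0 \<Longrightarrow> (\<And>n. \<alpha> n \<ge> 0) \<Longrightarrow> (\<And>n. \<beta> n \<ge> 0) \<Longrightarrow> path_weight \<sigma> \<alpha> \<beta> g \<ge> 0"
  unfolding path_weight_def by simp

lemma path_weight_Cons:
  assumes "g \<in> paths_from L m" and "m \<in> {n - 1..Suc n}"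
  shows "path_weight \<sigma> \<alpha> \<beta> (n # g) = \<alpha> n * step_weight \<sigma> n m * path_weight \<sigma> (\<lambda>_. 1) \<beta> g"
proof -
  have "g \<noteq> []" and "g ! 0 = m"
    using assms(1) motzkin_paths_nonempty unfolding paths_from_def by auto
  moreover have "step_weight \<sigma> n m = (if n = m then \<sigma> else 1)"
    using assms(2) unfolding step_weight_def by auto
  ultimately show ?thesis
    unfolding path_weight_def by (simp add: flat_steps_Cons nth_Cons')
qed

lemma sum_paths_from:
  "(\<Sum>g\<in>paths_from L n. path_weight \<sigma> (\<lambda>_. 1) \<beta> g) = transfer_pow \<sigma> \<beta> L n"
proof (induction L arbitrary: n)
  case 0
  have "flat_steps [n] = 0" unfolding flat_steps_def by auto
  then show ?case by (simp add: paths_from_0 path_weight_def)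
next
  case (Suc L)
  have inj: "inj_on (\<lambda>(m, g). n # g) (Sigma {n - 1..Suc n} (paths_from L))"
    unfolding paths_from_def inj_on_def by auto
  have "(\<Sum>g\<in>paths_from (Suc L) n. path_weight \<sigma> (\<lambda>_. 1) \<beta> g) =
      (\<Sum>(m, g)\<in>Sigma {n - 1..Suc n} (paths_from L). path_weight \<sigma> (\<lambda>_. 1) \<beta> (n # g))"
    unfolding paths_from_Suc sum.reindex[OF inj] by (simp add: comp_def case_prod_unfold)
  also have "\<dots> = (\<Sum>m\<in>{n - 1..Suc n}. \<Sum>g\<in>paths_from L m. path_weight \<sigma> (\<lambda>_. 1) \<beta> (n # g))"
    by (rule sum.Sigma[symmetric]) (simp_all add: finite_paths_from)
  also have "\<dots> = (\<Sum>m\<in>{n - 1..Suc n}. step_weight \<sigma> n m * transfer_pow \<sigma> \<beta> L m)"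
    by (intro sum.cong refl)
      (simp add: path_weight_Cons sum_distrib_left[symmetric] Suc.IH cong: sum.cong)
  finally show ?case unfolding transfer_pow_Suc_eq_sum .
qed

definition paths_with_prefix :: "nat \<Rightarrow> nat \<Rightarrow> (nat \<Rightarrow> nat) \<Rightarrow> nat list set" where
  "paths_with_prefix L K ns = {g \<in> motzkin_paths L. \<forall>k\<le>K. g ! k = ns k}"

lemma paths_with_prefix_0: "paths_with_prefix L 0 ns = paths_from L (ns 0)"
  unfolding paths_with_prefix_def paths_from_def by auto

lemma paths_with_prefix_Suc:
  "paths_with_prefix (Suc L) (Suc K) ns =
     (if ns 1 \<in> {ns 0 - 1..Suc (ns 0)}
      then Cons (ns 0) ` paths_with_prefix L K (\<lambda>i. ns (Suc i)) else {})"
proof -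
  have all_le_Suc: "(\<forall>k\<le>Suc K. P k) \<longleftrightarrow> P 0 \<and> (\<forall>k\<le>K. P (Suc k))" for P
    by (simp add: less_Suc_eq_le[symmetric] All_less_Suc2 del: less_Suc_eq_le)
  show ?thesis
    unfolding paths_with_prefix_def motzkin_paths_Suc_iff abs_diff_le_one_iff all_le_Suc
    by (auto simp: image_iff)
qed

lemma finite_paths_with_prefix: "finite (paths_with_prefix L K ns)"
  by (rule finite_subset[OF _ finite_paths_from[of L "ns 0"]])
    (auto simp: paths_with_prefix_def paths_from_def)

lemma sum_paths_with_prefix:
  assumes "K \<le> L"
  shows "(\<Sum>g\<in>paths_with_prefix L K ns. path_weight \<sigma> (\<lambda>_. 1) \<beta> g) =
    (\<Prod>i<K. step_weight \<sigma> (ns i) (ns (Suc i))) * transfer_pow \<sigma> \<beta> (L - K) (ns K)"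
  using assms
proof (induction K arbitrary: L ns)
  case 0
  then show ?case by (simp add: paths_with_prefix_0 sum_paths_from)
next
  case (Suc K)
  then obtain L' where L: "L = Suc L'" "K \<le> L'" by (cases L) auto
  let ?ns' = "\<lambda>i. ns (Suc i)"
  show ?case
  proof (cases "ns 1 \<in> {ns 0 - 1..Suc (ns 0)}")
    case False
    then have "step_weight \<sigma> (ns 0) (ns 1) = 0" unfolding step_weight_def by auto
    moreover have "paths_with_prefix L (Suc K) ns = {}"
      unfolding L paths_with_prefix_Suc if_not_P[OF False] ..
    ultimately show ?thesis by (simp add: prod.lessThan_Suc_shift del: prod.lessThan_Suc)
  next
    case True
    have "(\<Sum>g\<in>paths_with_prefix L (Suc K) ns. path_weight \<sigma> (\<lambda>_. 1) \<beta> g) =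
        (\<Sum>g\<in>paths_with_prefix L' K ?ns'. path_weight \<sigma> (\<lambda>_. 1) \<beta> (ns 0 # g))"
      unfolding L paths_with_prefix_Suc if_P[OF True] by (simp add: sum.reindex)
    also have "\<dots> = step_weight \<sigma> (ns 0) (ns 1) *
        (\<Sum>g\<in>paths_with_prefix L' K ?ns'. path_weight \<sigma> (\<lambda>_. 1) \<beta> g)"
      unfolding sum_distrib_left
    proof (intro sum.cong refl)
      fix g assume "g \<in> paths_with_prefix L' K ?ns'"
      then have "g \<in> paths_from L' (ns 1)"
        unfolding paths_with_prefix_def paths_from_def by auto
      with True show "path_weight \<sigma> (\<lambda>_. 1) \<beta> (ns 0 # g) =
          step_weight \<sigma> (ns 0) (ns 1) * path_weight \<sigma> (\<lambda>_. 1) \<beta> g"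
        by (simp add: path_weight_Cons)
    qed
    also have "\<dots> = (\<Prod>i<Suc K. step_weight \<sigma> (ns i) (ns (Suc i))) *
        transfer_pow \<sigma> \<beta> (L - Suc K) (ns (Suc K))"
      using L by (simp add: Suc.IH prod.lessThan_Suc_shift del: prod.lessThan_Suc)
    finally show ?thesis .
  qed
qed

lemma path_weight_eq_start:
  "g \<in> paths_from L n \<Longrightarrow> path_weight \<sigma> \<alpha> \<beta> g = \<alpha> n * path_weight \<sigma> (\<lambda>_. 1) \<beta> g"
  unfolding path_weight_def paths_from_def by simp

lemma infsum_path_weight_prefix:
  assumes "K \<le> L"
  shows "(\<Sum>\<^sub>\<infinity>g\<in>motzkin_paths L \<inter> {g. \<forall>k\<le>K. gam g k = ns k}. path_weight \<sigma> \<alpha> \<beta> g) =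
    \<alpha> (ns 0) * (\<Prod>i<K. step_weight \<sigma> (ns i) (ns (Suc i))) * transfer_pow \<sigma> \<beta> (L - K) (ns K)"
proof -
  have "motzkin_paths L \<inter> {g. \<forall>k\<le>K. gam g k = ns k} = paths_with_prefix L K ns"
    using assms unfolding paths_with_prefix_def gam_def motzkin_paths_def by auto
  moreover have "paths_with_prefix L K ns \<subseteq> paths_from L (ns 0)"
    unfolding paths_with_prefix_def paths_from_def by auto
  then have "(\<Sum>g\<in>paths_with_prefix L K ns. path_weight \<sigma> \<alpha> \<beta> g) =
      (\<Sum>g\<in>paths_with_prefix L K ns. \<alpha> (ns 0) * path_weight \<sigma> (\<lambda>_. 1) \<beta> g)"
    by (intro sum.cong refl) (auto intro: path_weight_eq_start)
  ultimately show ?thesis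
    by (simp add: finite_paths_with_prefix sum_distrib_left[symmetric]
        sum_paths_with_prefix[OF assms] mult.assoc)
qed

lemma has_sum_path_weight:
  assumes "\<sigma> \<ge> 0" "\<And>n. \<alpha> n \<ge> 0" "\<And>n. \<beta> n \<ge> 0"
    and "summable (\<lambda>n. \<alpha> n * transfer_pow \<sigma> \<beta> L n)"
  shows "(path_weight \<sigma> \<alpha> \<beta> has_sum (\<Sum>n. \<alpha> n * transfer_pow \<sigma> \<beta> L n)) (motzkin_paths L)"
proof -
  let ?Z = "\<lambda>n. \<alpha> n * transfer_pow \<sigma> \<beta> L n"
  have start: "((\<lambda>g. path_weight \<sigma> \<alpha> \<beta> (snd (n, g))) has_sum ?Z n) (paths_from L n)" for n
  proof -
    have "(\<Sum>g\<in>paths_from L n. path_weight \<sigma> \<alpha> \<beta> g) =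
        (\<Sum>g\<in>paths_from L n. \<alpha> n * path_weight \<sigma> (\<lambda>_. 1) \<beta> g)"
      by (intro sum.cong refl) (rule path_weight_eq_start)
    then show ?thesis
      by (simp add: has_sum_finiteI finite_paths_from sum_distrib_left[symmetric] sum_paths_from)
  qed
  have Z: "(?Z has_sum (\<Sum>n. ?Z n)) UNIV"
    using assms by (intro sums_nonneg_imp_has_sum summable_sums transfer_pow_nonneg mult_nonneg_nonneg)
  then have "(\<lambda>x. path_weight \<sigma> \<alpha> \<beta> (snd x)) summable_on Sigma UNIV (paths_from L)"
    using start assms path_weight_nonneg
    by (intro summable_on_SigmaI[where g = ?Z]) (auto intro: has_sum_imp_summable)
  then have "((\<lambda>x. path_weight \<sigma> \<alpha> \<beta> (snd x)) has_sum (\<Sum>n. ?Z n)) (Sigma UNIV (paths_from L))"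
    using Z start by (intro has_sum_SigmaI) auto
  moreover have "inj_on snd (Sigma UNIV (paths_from L))"
    unfolding paths_from_def inj_on_def by auto
  moreover have "motzkin_paths L = snd ` Sigma UNIV (paths_from L)"
    unfolding paths_from_def by (auto simp: image_iff)
  ultimately show ?thesis by (simp add: has_sum_reindex comp_def)
qed

lemma PrL_prefix_eq:
  assumes "K \<le> L" "\<sigma> \<ge> 0" "\<And>n. \<alpha> n \<ge> 0" "\<And>n. \<beta> n \<ge> 0"
    and "summable (\<lambda>n. \<alpha> n * transfer_pow \<sigma> \<beta> L n)"
  shows "PrL \<sigma> \<alpha> \<beta> L {g. \<forall>k\<le>K. gam g k = ns k} =
    \<alpha> (ns 0) * (\<Prod>i<K. step_weight \<sigma> (ns i) (ns (Suc i))) * transfer_pow \<sigma> \<beta> (L - K) (ns K) /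
    (\<Sum>n. \<alpha> n * transfer_pow \<sigma> \<beta> L n)"
  unfolding PrL_def infsum_path_weight_prefix[OF assms(1)]
    infsumI[OF has_sum_path_weight[OF assms(2-)]] ..

section \<open>The positive eigenvector and the limiting chain\<close>

text \<open>\<open>eigvec \<rho> n\<close> is the Chebyshev polynomial \<open>U\<^sub>n\<close> at \<open>(\<rho> + 1/\<rho>) / 2\<close>, i.e.
  \<open>(\<rho>^(n+1) - \<rho>^(-n-1)) / (\<rho> - 1/\<rho>)\<close>, or \<open>n + 1\<close> for \<open>\<rho> = 1\<close>.\<close>

definition eigvec :: "real \<Rightarrow> nat \<Rightarrow> real" where
  "eigvec \<rho> n = (\<Sum>j\<le>n. \<rho> ^ j * (1 / \<rho>) ^ (n - j))"

lemma eigvec_pos: "\<rho> > 0 \<Longrightarrow> eigvec \<rho> n > 0"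
  unfolding eigvec_def by (intro sum_pos) auto

lemma eigvec_one: "eigvec 1 n = real n + 1"
  unfolding eigvec_def by simp

lemma power_le_eigvec:
  assumes "\<rho> > 0"
  shows "\<rho> ^ n \<le> eigvec \<rho> n"
proof -
  have "\<rho> ^ n * (1 / \<rho>) ^ (n - n) \<le> (\<Sum>j\<le>n. \<rho> ^ j * (1 / \<rho>) ^ (n - j))"
    by (rule member_le_sum) (use assms in auto)
  then show ?thesis unfolding eigvec_def by simp
qed

lemma eigvec_closed_form: "(\<rho> - 1 / \<rho>) * eigvec \<rho> n = \<rho> ^ Suc n - (1 / \<rho>) ^ Suc n"
  unfolding eigvec_def diff_power_eq_sum[of \<rho> n "1 / \<rho>"] lessThan_Suc_atMost ..

lemma eigvec_Suc_left:
  assumes "\<rho> \<noteq> 0"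
  shows "eigvec \<rho> (Suc n) = (1 / \<rho>) ^ Suc n + \<rho> * eigvec \<rho> n"
  unfolding eigvec_def sum.atMost_Suc_shift by (simp add: sum_distrib_left mult.assoc)

lemma eigvec_recurrence:
  assumes "\<rho> \<noteq> 0"
  shows "(\<rho> + 1 / \<rho>) * eigvec \<rho> n = eigvec \<rho> (Suc n) + (if n = 0 then 0 else eigvec \<rho> (n - 1))"
proof (cases n)
  case 0
  then show ?thesis by (simp add: eigvec_def)
next
  case (Suc k)
  have "(\<rho> + 1 / \<rho>) * eigvec \<rho> n = \<rho> * eigvec \<rho> n + 1 / \<rho> * ((1 / \<rho>) ^ Suc k + \<rho> * eigvec \<rho> k)"
    using assms Suc eigvec_Suc_left[of \<rho> k] by (simp add: field_simps)
  also have "\<dots> = eigvec \<rho> (Suc n) + eigvec \<rho> k"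
    using assms Suc eigvec_Suc_left[of \<rho> n] by (simp add: algebra_simps)
  finally show ?thesis using Suc by simp
qed

lemma transfer_pow_eigvec:
  assumes "\<rho> \<noteq> 0"
  shows "transfer_pow \<sigma> (eigvec \<rho>) L n = (\<rho> + 1 / \<rho> + \<sigma>) ^ L * eigvec \<rho> n"
proof (induction L arbitrary: n)
  case (Suc L)
  have "transfer_pow \<sigma> (eigvec \<rho>) (Suc L) n = (\<rho> + 1 / \<rho> + \<sigma>) ^ L *
      (\<sigma> * eigvec \<rho> n + (eigvec \<rho> (Suc n) + (if n = 0 then 0 else eigvec \<rho> (n - 1))))"
    by (cases "n = 0") (simp_all add: Suc.IH algebra_simps)
  also have "\<dots> = (\<rho> + 1 / \<rho> + \<sigma>) ^ Suc L * eigvec \<rho> n"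
    unfolding eigvec_recurrence[OF assms, symmetric] by (simp add: algebra_simps)
  finally show ?case .
qed simp

lemma pow_minus_powi_eq_eigvec:
  "\<rho> ^ Suc k - \<rho> powi - int (Suc k) = (\<rho> - 1 / \<rho>) * eigvec \<rho> k"
  by (simp only: eigvec_closed_form power_int_minus power_int_of_nat power_one_over inverse_eq_divide)

lemma Qker_eq:
  assumes "\<rho> \<ge> 1" "\<sigma> \<ge> 0"
  shows "Qker \<sigma> \<rho> n m = step_weight \<sigma> n m * eigvec \<rho> m / ((\<rho> + 1 / \<rho> + \<sigma>) * eigvec \<rho> n)"
proof (cases "\<rho> = 1")
  case True
  have n_nz: "real n + 1 \<noteq> 0" and l_nz: "2 + \<sigma> \<noteq> 0" using assms by auto
  consider "m = Suc n" | "m = n" | "Suc m = n" | "m \<noteq> Suc n" "m \<noteq> n" "Suc m \<noteq> n" by blast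
  then show ?thesis
  proof cases
    case 2
    with True n_nz show ?thesis
      by (simp add: Qker_def step_weight_def eigvec_one nonzero_mult_divide_mult_cancel_right)
  next
    case 3
    then have "real m + 1 = real n" by auto
    with True n_nz l_nz 3 show ?thesis by (auto simp: Qker_def step_weight_def eigvec_one field_simps)
  qed (use True n_nz l_nz in \<open>auto simp: Qker_def step_weight_def eigvec_one field_simps\<close>)
next
  case False
  define c where "c = \<rho> - 1 / \<rho>"
  define l where "l = \<rho> + 1 / \<rho> + \<sigma>"
  have "1 * 1 < \<rho> * \<rho>" using assms False by (intro mult_strict_mono) auto
  then have nz: "c \<noteq> 0" "l \<noteq> 0" "eigvec \<rho> k \<noteq> 0" for k
    using assms eigvec_pos[of \<rho> k] unfolding c_def l_def
    by (auto simp: field_simps add_nonneg_eq_0_iff)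
  have up: "\<rho> ^ (n + 2) - \<rho> powi - (int n + 2) = c * eigvec \<rho> (Suc n)"
    and mid: "\<rho> ^ (n + 1) - \<rho> powi - (int n + 1) = c * eigvec \<rho> n"
    and down: "Suc m = n \<Longrightarrow> \<rho> ^ n - \<rho> powi - int n = c * eigvec \<rho> m"
    unfolding c_def pow_minus_powi_eq_eigvec[symmetric] by (simp_all add: algebra_simps)
  show ?thesis
    using False nz unfolding Qker_def step_weight_def l_def[symmetric] up mid
    by (cases "Suc m = n") (simp_all add: down)
qed

lemma prod_Qker:
  assumes "\<rho> \<ge> 1" "\<sigma> \<ge> 0"
  shows "(\<Prod>i<K. Qker \<sigma> \<rho> (ns i) (ns (Suc i))) =
    (\<Prod>i<K. step_weight \<sigma> (ns i) (ns (Suc i))) * eigvec \<rho> (ns K) /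
    ((\<rho> + 1 / \<rho> + \<sigma>) ^ K * eigvec \<rho> (ns 0))"
proof -
  have "Qker \<sigma> \<rho> n m = step_weight \<sigma> n m * (eigvec \<rho> m / eigvec \<rho> n) / (\<rho> + 1 / \<rho> + \<sigma>)" for n m
    by (simp add: Qker_eq[OF assms])
  then have "(\<Prod>i<K. Qker \<sigma> \<rho> (ns i) (ns (Suc i))) = (\<Prod>i<K. step_weight \<sigma> (ns i) (ns (Suc i))) *
      (\<Prod>i<K. eigvec \<rho> (ns (Suc i)) / eigvec \<rho> (ns i)) / (\<rho> + 1 / \<rho> + \<sigma>) ^ K"
    by (simp add: prod.distrib prod_dividef)
  also have "(\<Prod>i<K. eigvec \<rho> (ns (Suc i)) / eigvec \<rho> (ns i)) = eigvec \<rho> (ns K) / eigvec \<rho> (ns 0)"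
    using eigvec_pos[of \<rho>] assms by (intro prod_lessThan_telescope) (simp add: less_imp_not_eq2)
  finally show ?thesis by simp
qed

lemma geometric_convolution:
  "(\<Sum>i\<le>k. (a * \<rho>) ^ i * (a / \<rho>) ^ (k - i)) = a ^ k * eigvec \<rho> k"
proof -
  have "(a * \<rho>) ^ i * (a / \<rho>) ^ (k - i) = a ^ k * (\<rho> ^ i * (1 / \<rho>) ^ (k - i))" if "i \<le> k" for i
    using that by (simp add: power_mult_distrib power_divide power_add[symmetric] field_simps)
  then show ?thesis unfolding eigvec_def sum_distrib_left by (intro sum.cong) auto
qed

lemma eigvec_gf_sums:
  assumes "0 \<le> a" "a * \<rho> < 1" "a / \<rho> < 1" "\<rho> > 0"
  shows "(\<lambda>k. a ^ k * eigvec \<rho> k) sums (1 / ((1 - a * \<rho>) * (1 - a / \<rho>)))"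
proof -
  have "0 \<le> a * \<rho>" "0 \<le> a / \<rho>" using assms by auto
  then have "(\<lambda>k. \<Sum>i\<le>k. (a * \<rho>) ^ i * (a / \<rho>) ^ (k - i)) sums
      ((\<Sum>k. (a * \<rho>) ^ k) * (\<Sum>k. (a / \<rho>) ^ k))"
    using assms by (intro Cauchy_product_sums) (simp_all add: summable_geometric)
  then show ?thesis
    using assms by (simp add: geometric_convolution suminf_geometric)
qed

lemma sum_geom_law_eq:
  "sum_geom_law (a * \<rho>) (a / \<rho>) n = (1 - a * \<rho>) * (1 - a / \<rho>) * (a ^ n * eigvec \<rho> n)"
  unfolding sum_geom_law_def geom_def geometric_convolution[symmetric] sum_distrib_left
  by (simp add: ac_simps)

lemma sum_geom_law_mult_prod_Qker:
  assumes "\<rho> \<ge> 1" "\<sigma> \<ge> 0"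
  shows "sum_geom_law (a * \<rho>) (a / \<rho>) (ns 0) * (\<Prod>i<K. Qker \<sigma> \<rho> (ns i) (ns (Suc i))) =
    (1 - a * \<rho>) * (1 - a / \<rho>) * a ^ ns 0 * (\<Prod>i<K. step_weight \<sigma> (ns i) (ns (Suc i))) *
    eigvec \<rho> (ns K) / (\<rho> + 1 / \<rho> + \<sigma>) ^ K"
proof -
  have cancel: "q * (x * h) * (P * y / (z * h)) = q * x * P * y / z" if "h \<noteq> 0" for q x h P y z :: real
    using that by (simp add: field_simps)
  have "eigvec \<rho> (ns 0) \<noteq> 0" using eigvec_pos[of \<rho> "ns 0"] assms by simp
  then show ?thesis unfolding sum_geom_law_eq prod_Qker[OF assms] by (rule cancel)
qed

section \<open>Reduction to the growth of \<open>T^L \<beta>\<close>\<close>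

lemma ratio_power_tendsto:
  fixes c :: "nat \<Rightarrow> real"
  assumes cpos: "eventually (\<lambda>L. c L > 0) sequentially"
    and clim: "(\<lambda>L. c (Suc L) / c L) \<longlonglongrightarrow> l"
  shows "(\<lambda>L. c (L + K) / c L) \<longlonglongrightarrow> l ^ K"
proof (induction K)
  case 0
  have "eventually (\<lambda>L. 1 = c (L + 0) / c L) sequentially"
    using cpos by eventually_elim simp
  then have "(\<lambda>L. c (L + 0) / c L) \<longlonglongrightarrow> 1"
    by (rule Lim_transform_eventually[OF tendsto_const])
  then show ?case by simp
next
  case (Suc K)
  have "(\<lambda>L. c (Suc (L + K)) / c (L + K) * (c (L + K) / c L)) \<longlonglongrightarrow> l * l ^ K"
    using LIMSEQ_ignore_initial_segment[OF clim, of K] Suc.IH by (intro tendsto_mult) simp_all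
  moreover have "eventually (\<lambda>L. c (L + K) > 0) sequentially"
    using eventually_sequentially_seg[of "\<lambda>L. c L > 0" K] cpos by simp
  then have "eventually (\<lambda>L. c (Suc (L + K)) / c (L + K) * (c (L + K) / c L) =
      c (L + Suc K) / c L) sequentially"
    by eventually_elim simp
  ultimately show ?case by (simp add: Lim_transform_eventually)
qed

lemma shifted_ratio_tendsto:
  fixes c w :: "nat \<Rightarrow> real"
  assumes cpos: "eventually (\<lambda>L. c L > 0) sequentially"
    and clim: "(\<lambda>L. c (Suc L) / c L) \<longlonglongrightarrow> l" and "l \<noteq> 0"
    and wlim: "(\<lambda>L. w L / c L) \<longlonglongrightarrow> x"
  shows "(\<lambda>L. w (L - K) / c L) \<longlonglongrightarrow> x / l ^ K"
proof (rule LIMSEQ_offset[where k = K])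
  have "(\<lambda>L. (w L / c L) / (c (L + K) / c L)) \<longlonglongrightarrow> x / l ^ K"
    using assms by (intro tendsto_divide wlim ratio_power_tendsto) simp_all
  moreover from cpos have "eventually (\<lambda>L. (w L / c L) / (c (L + K) / c L) = w L / c (L + K)) sequentially"
    by eventually_elim simp
  ultimately show "(\<lambda>L. w (L + K - K) / c (L + K)) \<longlonglongrightarrow> x / l ^ K"
    by (simp add: Lim_transform_eventually)
qed

lemma tendsto_suminf_dominated:
  fixes f :: "nat \<Rightarrow> nat \<Rightarrow> real"
  assumes "\<And>k. (\<lambda>L. f k L) \<longlonglongrightarrow> g k"
    and "eventually (\<lambda>L. \<forall>k. \<bar>f k L\<bar> \<le> M k) sequentially" and "summable M"
  shows "(\<lambda>L. \<Sum>k. f k L) \<longlonglongrightarrow> (\<Sum>k. g k)"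
proof -
  have "eventually (\<lambda>(k, L). norm (f k L) \<le> M k) (at_top \<times>\<^sub>F sequentially)"
    unfolding eventually_prod_filter using assms(2) by (auto intro: exI[of _ "\<lambda>_. True"])
  from tannerys_theorem[OF assms(1) this assms(3)] show ?thesis by simp
qed

lemma weighted_suminf_ratio_tendsto:
  fixes W :: "nat \<Rightarrow> nat \<Rightarrow> real"
  assumes cpos: "eventually (\<lambda>L. c L > 0) sequentially"
    and Wlim: "\<And>n. (\<lambda>L. W L n / c L) \<longlonglongrightarrow> \<kappa> * h n"
    and dom: "eventually (\<lambda>L. \<forall>n. \<bar>W L n / c L\<bar> \<le> C * h n) sequentially"
    and "a \<ge> 0" and hsum: "summable (\<lambda>n. a ^ n * h n)"
  shows "eventually (\<lambda>L. summable (\<lambda>n. a ^ n * W L n)) sequentially"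
    and "(\<lambda>L. (\<Sum>n. a ^ n * W L n) / c L) \<longlonglongrightarrow> \<kappa> * (\<Sum>n. a ^ n * h n)"
proof -
  have dom': "eventually (\<lambda>L. \<forall>n. \<bar>a ^ n * (W L n / c L)\<bar> \<le> C * (a ^ n * h n)) sequentially"
    using dom
  proof eventually_elim
    case (elim L)
    have "a ^ n * \<bar>W L n / c L\<bar> \<le> a ^ n * (C * h n)" for n
      using elim \<open>a \<ge> 0\<close> by (intro mult_left_mono) auto
    with \<open>a \<ge> 0\<close> show ?case by (simp add: abs_mult mult.left_commute)
  qed
  have Msum: "summable (\<lambda>n. C * (a ^ n * h n))" using hsum by (rule summable_mult)
  have "eventually (\<lambda>L. summable (\<lambda>n. a ^ n * (W L n / c L)) \<and> c L > 0) sequentially"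
    using dom' cpos
  proof eventually_elim
    case (elim L)
    have "summable (\<lambda>n. a ^ n * (W L n / c L))"
      by (rule summable_comparison_test'[OF Msum]) (use elim in \<open>simp only: real_norm_def\<close>)
    with elim show ?case by simp
  qed
  then have sums: "eventually (\<lambda>L. summable (\<lambda>n. a ^ n * W L n) \<and>
      (\<Sum>n. a ^ n * (W L n / c L)) = (\<Sum>n. a ^ n * W L n) / c L) sequentially"
  proof eventually_elim
    case (elim L)
    then have "summable (\<lambda>n. a ^ n * W L n)"
      by (auto simp: summable_divide_iff)
    then show ?case using suminf_divide[of _ "c L"] by simp
  qed
  then show "eventually (\<lambda>L. summable (\<lambda>n. a ^ n * W L n)) sequentially"
    by (rule eventually_mono) simp
  have "(\<lambda>L. \<Sum>n. a ^ n * (W L n / c L)) \<longlonglongrightarrow> (\<Sum>n. a ^ n * (\<kappa> * h n))"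
    using dom' Msum
    by (intro tendsto_suminf_dominated tendsto_mult_left Wlim)
  moreover have "(\<Sum>n. a ^ n * (\<kappa> * h n)) = \<kappa> * (\<Sum>n. a ^ n * h n)"
    using hsum by (simp add: suminf_mult[symmetric] ac_simps)
  ultimately show "(\<lambda>L. (\<Sum>n. a ^ n * W L n) / c L) \<longlonglongrightarrow> \<kappa> * (\<Sum>n. a ^ n * h n)"
    using sums by (auto intro: Lim_transform_eventually elim: eventually_mono)
qed

text \<open>Only the growth ratio of the normalisation \<open>c\<close> is prescribed, since for \<open>\<rho> = 1\<close> it
  carries a polynomial correction to \<open>(2 + \<sigma>)^L\<close>.\<close>

definition eigvec_asymptotics :: "real \<Rightarrow> (nat \<Rightarrow> real) \<Rightarrow> real \<Rightarrow> bool" where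
  "eigvec_asymptotics \<sigma> \<beta> \<rho> \<longleftrightarrow> (\<exists>c \<kappa> C. \<kappa> > 0 \<and> eventually (\<lambda>L. c L > 0) sequentially \<and>
     (\<lambda>L. c (Suc L) / c L) \<longlonglongrightarrow> \<rho> + 1 / \<rho> + \<sigma> \<and>
     (\<forall>n. (\<lambda>L. transfer_pow \<sigma> \<beta> L n / c L) \<longlonglongrightarrow> \<kappa> * eigvec \<rho> n) \<and>
     eventually (\<lambda>L. \<forall>n. \<bar>transfer_pow \<sigma> \<beta> L n / c L\<bar> \<le> C * eigvec \<rho> n) sequentially)"

lemma prefix_prob_tendsto:
  assumes "\<sigma> > 0" "0 < a" "\<rho> \<ge> 1" "a * \<rho> < 1" "\<And>n. \<beta> n \<ge> 0"
    and "eigvec_asymptotics \<sigma> \<beta> \<rho>"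
  shows "(\<lambda>L. PrL \<sigma> (\<lambda>n. a ^ n) \<beta> L {g. \<forall>k\<le>K. gam g k = ns k}) \<longlonglongrightarrow>
    sum_geom_law (a * \<rho>) (a / \<rho>) (ns 0) * (\<Prod>i<K. Qker \<sigma> \<rho> (ns i) (ns (Suc i)))"
proof -
  obtain c \<kappa> C where "\<kappa> > 0" and cpos: "eventually (\<lambda>L. c L > 0) sequentially"
    and clim: "(\<lambda>L. c (Suc L) / c L) \<longlonglongrightarrow> \<rho> + 1 / \<rho> + \<sigma>"
    and Wlim: "\<And>n. (\<lambda>L. transfer_pow \<sigma> \<beta> L n / c L) \<longlonglongrightarrow> \<kappa> * eigvec \<rho> n"
    and dom: "eventually (\<lambda>L. \<forall>n. \<bar>transfer_pow \<sigma> \<beta> L n / c L\<bar> \<le> C * eigvec \<rho> n) sequentially"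
    using assms(6) unfolding eigvec_asymptotics_def by blast
  define W where "W = transfer_pow \<sigma> \<beta>"
  define l where "l = \<rho> + 1 / \<rho> + \<sigma>"
  define q where "q = (1 - a * \<rho>) * (1 - a / \<rho>)"
  define P where "P = (\<Prod>i<K. step_weight \<sigma> (ns i) (ns (Suc i)))"
  have "a \<le> a * \<rho>" using assms by (simp add: mult_le_cancel_left1)
  then have "a < \<rho>" using assms by linarith
  then have "a / \<rho> < 1" using assms by simp
  then have "q > 0" "(\<lambda>n. a ^ n * eigvec \<rho> n) sums (1 / q)"
    using assms unfolding q_def by (auto intro: eigvec_gf_sums)
  have "l > 0" unfolding l_def using assms by (intro add_pos_pos) auto
  have Zsumm: "eventually (\<lambda>L. summable (\<lambda>n. a ^ n * W L n)) sequentially"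
    and Zlim: "(\<lambda>L. (\<Sum>n. a ^ n * W L n) / c L) \<longlonglongrightarrow> \<kappa> * (1 / q)"
    using weighted_suminf_ratio_tendsto[OF cpos Wlim dom, of a] assms \<open>(\<lambda>n. _) sums (1 / q)\<close>
    unfolding W_def by (auto simp: sums_iff)
  have shift: "(\<lambda>L. W (L - K) (ns K) / c L) \<longlonglongrightarrow> \<kappa> * eigvec \<rho> (ns K) / l ^ K"
    using cpos clim \<open>l > 0\<close> Wlim unfolding W_def l_def by (intro shifted_ratio_tendsto) auto
  have "(\<lambda>L. a ^ ns 0 * P * (W (L - K) (ns K) / c L) / ((\<Sum>n. a ^ n * W L n) / c L))
      \<longlonglongrightarrow> a ^ ns 0 * P * (\<kappa> * eigvec \<rho> (ns K) / l ^ K) / (\<kappa> * (1 / q))"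
    using \<open>\<kappa> > 0\<close> \<open>q > 0\<close> by (intro tendsto_intros shift Zlim) auto
  moreover have "eventually (\<lambda>L. a ^ ns 0 * P * (W (L - K) (ns K) / c L) /
      ((\<Sum>n. a ^ n * W L n) / c L) = PrL \<sigma> (\<lambda>n. a ^ n) \<beta> L {g. \<forall>k\<le>K. gam g k = ns k}) sequentially"
    using Zsumm cpos eventually_ge_at_top[of K]
  proof eventually_elim
    case (elim L)
    then show ?case
      using assms unfolding W_def P_def by (simp add: PrL_prefix_eq)
  qed
  ultimately have "(\<lambda>L. PrL \<sigma> (\<lambda>n. a ^ n) \<beta> L {g. \<forall>k\<le>K. gam g k = ns k}) \<longlonglongrightarrow>
      a ^ ns 0 * P * (\<kappa> * eigvec \<rho> (ns K) / l ^ K) / (\<kappa> * (1 / q))"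
    by (rule Lim_transform_eventually)
  moreover have "a ^ ns 0 * P * (\<kappa> * eigvec \<rho> (ns K) / l ^ K) / (\<kappa> * (1 / q)) =
      sum_geom_law (a * \<rho>) (a / \<rho>) (ns 0) * (\<Prod>i<K. Qker \<sigma> \<rho> (ns i) (ns (Suc i)))"
    using \<open>\<kappa> > 0\<close> \<open>q > 0\<close>
    unfolding sum_geom_law_mult_prod_Qker[OF \<open>\<rho> \<ge> 1\<close> less_imp_le[OF \<open>\<sigma> > 0\<close>]]
      l_def[symmetric] P_def[symmetric] q_def[symmetric]
    by (simp add: field_simps)
  ultimately show ?thesis by simp
qed

section \<open>Boundary weights above the critical value\<close>

lemma add_inverse_strict_mono:
  fixes s r :: real
  assumes "1 \<le> s" "s < r"
  shows "s + 1 / s < r + 1 / r"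
proof -
  have "1 * 1 < r * s" using assms by (intro mult_less_le_imp_less) auto
  then have "(r - s) / (r * s) < r - s" using assms by (simp add: divide_less_eq)
  moreover have "1 / s - 1 / r = (r - s) / (r * s)" using assms by (simp add: field_simps)
  ultimately show ?thesis by linarith
qed

text \<open>For \<open>\<rho> > 1\<close> the boundary weight \<open>\<rho>^n\<close> is a multiple of \<open>eigvec \<rho>\<close> plus the bounded
  remainder \<open>\<rho>^(-n-2)\<close>; the remainder is dominated by \<open>s^n\<close>, \<open>1 < s < \<rho>\<close>, whose growth rate
  \<open>s + 1/s + \<sigma>\<close> under \<open>T\<close> is strictly smaller than \<open>\<rho> + 1/\<rho> + \<sigma>\<close>.\<close>

lemma power_eq_eigvec_plus_remainder:
  assumes "\<rho> \<noteq> 0"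
  shows "\<rho> ^ n = (1 - 1 / \<rho> ^ 2) * eigvec \<rho> n + (1 / \<rho>) ^ (n + 2)"
proof -
  have "(1 - 1 / \<rho> ^ 2) * eigvec \<rho> n = (\<rho> - 1 / \<rho>) * eigvec \<rho> n / \<rho>"
    using assms by (simp add: field_simps power2_eq_square)
  also have "\<dots> = \<rho> ^ n - (1 / \<rho>) ^ (n + 2)"
    unfolding eigvec_closed_form using assms by (simp add: field_simps)
  finally show ?thesis by simp
qed

lemma transfer_pow_power_eq:
  assumes "\<rho> \<noteq> 0"
  shows "transfer_pow \<sigma> (\<lambda>n. \<rho> ^ n) L n = (1 - 1 / \<rho> ^ 2) * ((\<rho> + 1 / \<rho> + \<sigma>) ^ L * eigvec \<rho> n) +
    transfer_pow \<sigma> (\<lambda>n. (1 / \<rho>) ^ (n + 2)) L n"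
proof -
  have "transfer_pow \<sigma> (\<lambda>n. \<rho> ^ n) L n =
      transfer_pow \<sigma> (\<lambda>n. (1 - 1 / \<rho> ^ 2) * eigvec \<rho> n + (1 / \<rho>) ^ (n + 2)) L n"
    by (simp only: power_eq_eigvec_plus_remainder[OF assms, symmetric])
  then show ?thesis
    unfolding transfer_pow_add transfer_pow_cmult using assms by (simp add: transfer_pow_eigvec)
qed

lemma transfer_pow_remainder_bounds:
  assumes "\<sigma> \<ge> 0" "\<rho> \<ge> 1" "s \<ge> 1"
  shows "0 \<le> transfer_pow \<sigma> (\<lambda>n. (1 / \<rho>) ^ (n + 2)) L n"
    and "transfer_pow \<sigma> (\<lambda>n. (1 / \<rho>) ^ (n + 2)) L n \<le> (s + 1 / s + \<sigma>) ^ L * s ^ n"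
proof -
  show "0 \<le> transfer_pow \<sigma> (\<lambda>n. (1 / \<rho>) ^ (n + 2)) L n"
    using assms by (intro transfer_pow_nonneg) auto
  have "(1 / \<rho>) ^ (n + 2) \<le> s ^ n" for n
    using assms by (intro order.trans[OF power_le_one one_le_power]) auto
  then show "transfer_pow \<sigma> (\<lambda>n. (1 / \<rho>) ^ (n + 2)) L n \<le> (s + 1 / s + \<sigma>) ^ L * s ^ n"
    using assms by (intro order.trans[OF transfer_pow_mono transfer_pow_power_le]) auto
qed

lemma remainder_ratio_bounds:
  assumes "\<sigma> \<ge> 0" "\<rho> > 1"
  defines "R \<equiv> \<lambda>L n. transfer_pow \<sigma> (\<lambda>n. (1 / \<rho>) ^ (n + 2)) L n / (\<rho> + 1 / \<rho> + \<sigma>) ^ L"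
  shows "(\<lambda>L. R L n) \<longlonglongrightarrow> 0" and "0 \<le> R L n" and "R L n \<le> eigvec \<rho> n"
proof -
  define l where "l = \<rho> + 1 / \<rho> + \<sigma>"
  define s where "s = (1 + \<rho>) / 2"
  define \<mu> where "\<mu> = s + 1 / s + \<sigma>"
  have s: "1 < s" "s < \<rho>" unfolding s_def using assms by auto
  have "0 < \<mu>" unfolding \<mu>_def using s assms by (intro add_pos_nonneg add_pos_pos) auto
  have "\<mu> < l" unfolding \<mu>_def l_def using add_inverse_strict_mono[of s \<rho>] s by auto
  have "l > 0" using \<open>0 < \<mu>\<close> \<open>\<mu> < l\<close> by linarith
  have R: "0 \<le> R L n \<and> R L n \<le> s ^ n * (\<mu> / l) ^ L" for L n
  proof -
    have "0 \<le> R L n"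
      unfolding R_def using assms by (intro divide_nonneg_nonneg transfer_pow_remainder_bounds) auto
    moreover have "R L n \<le> \<mu> ^ L * s ^ n / l ^ L"
      unfolding R_def l_def[symmetric] \<mu>_def using assms s \<open>l > 0\<close>
      by (intro divide_right_mono transfer_pow_remainder_bounds) auto
    ultimately show ?thesis by (simp add: power_divide mult.commute)
  qed
  then show "0 \<le> R L n" by blast
  have "s ^ n * (\<mu> / l) ^ L \<le> s ^ n"
    using \<open>0 < \<mu>\<close> \<open>\<mu> < l\<close> s by (intro mult_left_le power_le_one) auto
  also have "\<dots> \<le> eigvec \<rho> n"
    using s assms by (intro order.trans[OF power_mono power_le_eigvec]) auto
  finally show "R L n \<le> eigvec \<rho> n" using R[of L n] by linarith
  have "(\<lambda>L. s ^ n * (\<mu> / l) ^ L) \<longlonglongrightarrow> 0"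
    using \<open>0 < \<mu>\<close> \<open>\<mu> < l\<close> by (intro tendsto_mult_right_zero LIMSEQ_power_zero) auto
  then show "(\<lambda>L. R L n) \<longlonglongrightarrow> 0"
    by (rule Lim_null_comparison[OF always_eventually, rotated]) (use R in simp)
qed

lemma eigvec_asymptotics_supercritical:
  assumes "\<sigma> \<ge> 0" "\<rho> > 1"
  shows "eigvec_asymptotics \<sigma> (\<lambda>n. \<rho> ^ n) \<rho>"
proof -
  define l where "l = \<rho> + 1 / \<rho> + \<sigma>"
  define \<kappa> where "\<kappa> = 1 - 1 / \<rho> ^ 2"
  define R where "R = (\<lambda>L n. transfer_pow \<sigma> (\<lambda>n. (1 / \<rho>) ^ (n + 2)) L n / l ^ L)"
  have R: "(\<lambda>L. R L n) \<longlonglongrightarrow> 0" "0 \<le> R L n" "R L n \<le> eigvec \<rho> n" for L n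
    unfolding R_def l_def using remainder_ratio_bounds[OF assms] by simp_all
  have "1 < \<rho> ^ 2" using assms by (simp add: one_less_power)
  then have "\<kappa> > 0" "l > 0" unfolding \<kappa>_def l_def using assms by (auto intro!: add_pos_nonneg)
  have W: "transfer_pow \<sigma> (\<lambda>n. \<rho> ^ n) L n / l ^ L = \<kappa> * eigvec \<rho> n + R L n" for L n
    using transfer_pow_power_eq[of \<rho> \<sigma> L n] assms \<open>l > 0\<close>
    unfolding R_def \<kappa>_def l_def by (simp add: add_divide_distrib)
  show ?thesis
    unfolding eigvec_asymptotics_def l_def[symmetric]
  proof (intro exI conjI allI)
    show "(\<lambda>L. transfer_pow \<sigma> (\<lambda>n. \<rho> ^ n) L n / l ^ L) \<longlonglongrightarrow> \<kappa> * eigvec \<rho> n" for n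
      unfolding W using tendsto_add[OF tendsto_const R(1)] by simp
    show "eventually (\<lambda>L. 0 < l ^ L) sequentially" using \<open>l > 0\<close> by simp
    show "(\<lambda>L. l ^ Suc L / l ^ L) \<longlonglongrightarrow> l" using \<open>l > 0\<close> by simp
    show "eventually (\<lambda>L. \<forall>n. \<bar>transfer_pow \<sigma> (\<lambda>n. \<rho> ^ n) L n / l ^ L\<bar> \<le> (\<kappa> + 1) * eigvec \<rho> n)
        sequentially"
    proof (intro always_eventually allI)
      fix L n
      show "\<bar>transfer_pow \<sigma> (\<lambda>n. \<rho> ^ n) L n / l ^ L\<bar> \<le> (\<kappa> + 1) * eigvec \<rho> n"
        unfolding W using R(2,3)[of L n] \<open>\<kappa> > 0\<close> eigvec_pos[of \<rho> n] assms
        by (simp add: distrib_right)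
    qed
  qed (rule \<open>\<kappa> > 0\<close>)
qed

section \<open>The sine transform\<close>

text \<open>\<open>chebU n \<theta>\<close> is the Chebyshev polynomial \<open>U\<^sub>n(cos \<theta>) = sin ((n + 1) \<theta>) / sin \<theta>\<close>.\<close>

definition chebU :: "nat \<Rightarrow> real \<Rightarrow> real" where
  "chebU n \<theta> = (\<Sum>j\<le>n. cos ((real n - 2 * real j) * \<theta>))"

lemma continuous_on_chebU [continuous_intros]: "continuous_on S (chebU n)"
  unfolding chebU_def by (intro continuous_intros)

lemma chebU_0: "chebU n 0 = real n + 1"
  unfolding chebU_def by simp

lemma abs_chebU_le: "\<bar>chebU n \<theta>\<bar> \<le> real n + 1"
proof -
  have "\<bar>chebU n \<theta>\<bar> \<le> (\<Sum>j\<le>n. \<bar>cos ((real n - 2 * real j) * \<theta>)\<bar>)"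
    unfolding chebU_def by (rule sum_abs)
  also have "\<dots> \<le> (\<Sum>j\<le>n. 1)" by (intro sum_mono) auto
  finally show ?thesis by simp
qed

lemma chebU_recurrence:
  "2 * cos \<theta> * chebU n \<theta> = chebU (Suc n) \<theta> + (if n = 0 then 0 else chebU (n - 1) \<theta>)"
proof -
  have "2 * cos \<theta> * chebU n \<theta> = (\<Sum>j\<le>n. cos ((real (Suc n) - 2 * real j) * \<theta>)) +
      (\<Sum>j\<le>n. cos ((real n - 1 - 2 * real j) * \<theta>))"
    unfolding chebU_def sum_distrib_left sum.distrib[symmetric]
  proof (intro sum.cong refl)
    fix j
    have "2 * cos \<theta> * cos ((real n - 2 * real j) * \<theta>) =
        cos ((real n - 2 * real j) * \<theta> + \<theta>) + cos ((real n - 2 * real j) * \<theta> - \<theta>)"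
      by (simp add: cos_add cos_diff)
    then show "2 * cos \<theta> * cos ((real n - 2 * real j) * \<theta>) =
        cos ((real (Suc n) - 2 * real j) * \<theta>) + cos ((real n - 1 - 2 * real j) * \<theta>)"
      by (simp add: algebra_simps)
  qed
  also have "(\<Sum>j\<le>n. cos ((real (Suc n) - 2 * real j) * \<theta>)) =
      chebU (Suc n) \<theta> - cos ((- real (Suc n)) * \<theta>)"
    unfolding chebU_def by (simp add: algebra_simps)
  also have "(\<Sum>j\<le>n. cos ((real n - 1 - 2 * real j) * \<theta>)) =
      (if n = 0 then 0 else chebU (n - 1) \<theta>) + cos ((- real (Suc n)) * \<theta>)"
  proof (cases n)
    case (Suc k)
    then have "(\<Sum>j\<le>n. cos ((real n - 1 - 2 * real j) * \<theta>)) =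
        (\<Sum>j\<le>k. cos ((real k - 2 * real j) * \<theta>)) + cos ((real n - 1 - 2 * real n) * \<theta>)"
      by (simp add: algebra_simps)
    with Suc show ?thesis unfolding chebU_def by (simp add: algebra_simps)
  qed (simp add: algebra_simps)
  finally show ?thesis by simp
qed

lemma sin_mult_chebU: "sin \<theta> * chebU n \<theta> = sin ((real n + 1) * \<theta>)"
proof -
  let ?s = "\<lambda>j. sin ((real n + 1 - 2 * real j) * \<theta>)"
  have "2 * sin \<theta> * chebU n \<theta> = (\<Sum>j\<le>n. ?s j - ?s (Suc j))"
    unfolding chebU_def sum_distrib_left
  proof (intro sum.cong refl)
    fix j
    have "2 * sin \<theta> * cos ((real n - 2 * real j) * \<theta>) =
        sin ((real n - 2 * real j) * \<theta> + \<theta>) - sin ((real n - 2 * real j) * \<theta> - \<theta>)"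
      by (simp add: sin_add sin_diff)
    then show "2 * sin \<theta> * cos ((real n - 2 * real j) * \<theta>) = ?s j - ?s (Suc j)"
      by (simp add: algebra_simps)
  qed
  also have "\<dots> = ?s 0 - ?s (Suc n)"
    by (rule sum_telescope)
  also have "\<dots> = 2 * sin ((real n + 1) * \<theta>)"
    using sin_minus[of "(real n + 1) * \<theta>"] by (simp add: algebra_simps)
  finally show ?thesis by simp
qed

definition symb :: "real \<Rightarrow> real \<Rightarrow> real" where
  "symb \<sigma> \<theta> = \<sigma> + 2 * cos \<theta>"

lemma continuous_on_symb [continuous_intros]: "continuous_on S (symb \<sigma>)"
  unfolding symb_def by (intro continuous_intros)

definition power_integral :: "real \<Rightarrow> nat \<Rightarrow> (real \<Rightarrow> real) \<Rightarrow> real" where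
  "power_integral \<sigma> L h = integral {0..pi} (\<lambda>\<theta>. symb \<sigma> \<theta> ^ L * h \<theta>)"

lemma transfer_pow_integral_repr:
  assumes cont: "\<And>n. continuous_on {0..pi} (v n)"
    and rec: "\<And>n \<theta>. 2 * cos \<theta> * v n \<theta> = v (Suc n) \<theta> + (if n = 0 then 0 else v (n - 1) \<theta>)"
    and base: "\<And>n. b n = C * integral {0..pi} (v n)"
  shows "transfer_pow \<sigma> b L n = C * power_integral \<sigma> L (v n)"
proof (induction L arbitrary: n)
  case (Suc L)
  let ?f = "\<lambda>k \<theta>. symb \<sigma> \<theta> ^ L * v k \<theta>"
  have int: "?f k integrable_on {0..pi}" "(\<lambda>\<theta>. \<sigma> * ?f k \<theta>) integrable_on {0..pi}" for k
    by (intro integrable_continuous_interval continuous_intros cont)+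
  have pt: "symb \<sigma> \<theta> ^ Suc L * v n \<theta> =
      \<sigma> * ?f n \<theta> + ?f (Suc n) \<theta> + (if n = 0 then 0 else ?f (n - 1) \<theta>)" for \<theta>
  proof -
    have "symb \<sigma> \<theta> ^ Suc L * v n \<theta> = symb \<sigma> \<theta> ^ L * (\<sigma> * v n \<theta> + 2 * cos \<theta> * v n \<theta>)"
      by (simp add: symb_def algebra_simps)
    then show ?thesis unfolding rec by (simp add: algebra_simps)
  qed
  have "power_integral \<sigma> (Suc L) (v n) = \<sigma> * power_integral \<sigma> L (v n) +
      power_integral \<sigma> L (v (Suc n)) + (if n = 0 then 0 else power_integral \<sigma> L (v (n - 1)))"
    unfolding power_integral_def pt
    by (cases "n = 0") (simp_all add: integral_add int integrable_add)
  then show ?case by (simp add: Suc.IH algebra_simps)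
qed (simp add: base power_integral_def)

lemma integral_cos_int_mult:
  fixes k :: int
  shows "integral {0..pi} (\<lambda>\<theta>. cos (of_int k * \<theta>)) = (if k = 0 then pi else 0)"
proof (cases "k = 0")
  case False
  have "((\<lambda>\<theta>. cos (of_int k * \<theta>)) has_integral
      (sin (of_int k * pi) / of_int k - sin (of_int k * 0) / of_int k)) {0..pi}"
  proof (rule fundamental_theorem_of_calculus)
    fix x :: real
    have "((\<lambda>\<theta>. sin (of_int k * \<theta>) / of_int k) has_real_derivative cos (of_int k * x))
        (at x within {0..pi})"
      using False by (auto intro!: derivative_eq_intros)
    then show "((\<lambda>\<theta>. sin (of_int k * \<theta>) / of_int k) has_vector_derivative cos (of_int k * x))
        (at x within {0..pi})"
      by (simp add: has_real_derivative_iff_has_vector_derivative)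
  qed simp
  with False show ?thesis by (simp add: integral_unique sin_times_pi_eq_0)
qed simp

lemma integral_chebU: "integral {0..pi} (chebU n) = (if even n then pi else 0)"
proof -
  have "integral {0..pi} (chebU n) = (\<Sum>j\<le>n. integral {0..pi} (\<lambda>\<theta>. cos ((real n - 2 * real j) * \<theta>)))"
    unfolding chebU_def by (intro integral_sum integrable_continuous_interval continuous_intros) auto
  also have "\<dots> = (\<Sum>j\<le>n. if even n \<and> j = n div 2 then pi else 0)"
  proof (intro sum.cong refl)
    fix j
    have "real n - 2 * real j = of_int (int n - 2 * int j)" by simp
    moreover have "int n = 2 * int j \<longleftrightarrow> even n \<and> j = n div 2" by presburger
    ultimately show "integral {0..pi} (\<lambda>\<theta>. cos ((real n - 2 * real j) * \<theta>)) =
        (if even n \<and> j = n div 2 then pi else 0)"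
      using integral_cos_int_mult[of "int n - 2 * int j"] by simp
  qed
  also have "\<dots> = (if even n then pi else 0)"
    by (cases "even n") simp_all
  finally show ?thesis .
qed

lemma integral_one_plus_cos_chebU: "integral {0..pi} (\<lambda>\<theta>. (1 + cos \<theta>) * chebU n \<theta>) = pi"
proof -
  have int: "chebU k integrable_on {0..pi}" for k
    by (intro integrable_continuous_interval continuous_intros)
  have "(\<lambda>\<theta>. (1 + cos \<theta>) * chebU n \<theta>) =
      (\<lambda>\<theta>. chebU n \<theta> + (chebU (Suc n) \<theta> + (if n = 0 then 0 else chebU (n - 1) \<theta>)) / 2)"
    using chebU_recurrence[of _ n] by (simp add: fun_eq_iff field_simps)
  then show ?thesis
    by (cases n) (simp_all add: integral_add integrable_add int integral_chebU)
qed

lemma integral_sin_mult_sin: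
  "integral {0..pi} (\<lambda>\<theta>. sin ((real n + 1) * \<theta>) * sin ((real m + 1) * \<theta>)) =
    (if n = m then pi / 2 else 0)"
proof -
  define c :: "int \<Rightarrow> real \<Rightarrow> real" where "c = (\<lambda>k \<theta>. cos (of_int k * \<theta>) / 2)"
  have pt: "sin ((real n + 1) * \<theta>) * sin ((real m + 1) * \<theta>) =
      c (int n - int m) \<theta> - c (int n + int m + 2) \<theta>" for \<theta>
  proof -
    have "of_int (int n - int m) * \<theta> = (real n + 1) * \<theta> - (real m + 1) * \<theta>"
      and "of_int (int n + int m + 2) * \<theta> = (real n + 1) * \<theta> + (real m + 1) * \<theta>"
      by (simp_all add: algebra_simps)
    moreover have "sin x * sin y = cos (x - y) / 2 - cos (x + y) / 2" for x y :: real
      by (simp add: cos_add cos_diff field_simps)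
    ultimately show ?thesis unfolding c_def by (simp only:)
  qed
  have int: "c k integrable_on {0..pi}" for k
    unfolding c_def by (intro integrable_continuous_interval continuous_intros) simp
  have "integral {0..pi} (\<lambda>\<theta>. sin ((real n + 1) * \<theta>) * sin ((real m + 1) * \<theta>)) =
      integral {0..pi} (c (int n - int m)) - integral {0..pi} (c (int n + int m + 2))"
    unfolding pt by (rule integral_diff[OF int int])
  moreover have "integral {0..pi} (c k) = (if k = 0 then pi else 0) / 2" for k
    unfolding c_def by (simp add: integral_cos_int_mult)
  ultimately show ?thesis by (cases "n = m") auto
qed

lemma transfer_pow_one_repr:
  "transfer_pow \<sigma> (\<lambda>_. 1) L n = 1 / pi * power_integral \<sigma> L (\<lambda>\<theta>. (1 + cos \<theta>) * chebU n \<theta>)"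
proof (rule transfer_pow_integral_repr)
  show "continuous_on {0..pi} (\<lambda>\<theta>. (1 + cos \<theta>) * chebU n \<theta>)" for n
    by (intro continuous_intros)
  show "2 * cos \<theta> * ((1 + cos \<theta>) * chebU n \<theta>) = (1 + cos \<theta>) * chebU (Suc n) \<theta> +
      (if n = 0 then 0 else (1 + cos \<theta>) * chebU (n - 1) \<theta>)" for n \<theta>
    using chebU_recurrence[of \<theta> n] by (auto simp: algebra_simps)
qed (simp add: integral_one_plus_cos_chebU)

lemma transfer_pow_indicator_repr:
  "transfer_pow \<sigma> (\<lambda>k. if k = m then 1 else 0) L n =
    2 / pi * power_integral \<sigma> L (\<lambda>\<theta>. sin \<theta> ^ 2 * (chebU n \<theta> * chebU m \<theta>))"
proof (rule transfer_pow_integral_repr)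
  show "continuous_on {0..pi} (\<lambda>\<theta>. sin \<theta> ^ 2 * (chebU n \<theta> * chebU m \<theta>))" for n
    by (intro continuous_intros)
  show "2 * cos \<theta> * (sin \<theta> ^ 2 * (chebU n \<theta> * chebU m \<theta>)) =
      sin \<theta> ^ 2 * (chebU (Suc n) \<theta> * chebU m \<theta>) +
      (if n = 0 then 0 else sin \<theta> ^ 2 * (chebU (n - 1) \<theta> * chebU m \<theta>))" for n \<theta>
  proof -
    have "2 * cos \<theta> * (sin \<theta> ^ 2 * (chebU n \<theta> * chebU m \<theta>)) =
        sin \<theta> ^ 2 * chebU m \<theta> * (2 * cos \<theta> * chebU n \<theta>)"
      by (simp only: ac_simps)
    then show ?thesis unfolding chebU_recurrence by (simp add: algebra_simps)
  qed
  have "sin \<theta> ^ 2 * (chebU n \<theta> * chebU m \<theta>) = sin ((real n + 1) * \<theta>) * sin ((real m + 1) * \<theta>)"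
    for n \<theta>
    using sin_mult_chebU[of \<theta> n] sin_mult_chebU[of \<theta> m] by (simp add: power2_eq_square ac_simps)
  then show "(if n = m then 1 else 0) =
      2 / pi * integral {0..pi} (\<lambda>\<theta>. sin \<theta> ^ 2 * (chebU n \<theta> * chebU m \<theta>))" for n
    by (simp add: integral_sin_mult_sin)
qed

section \<open>Laplace's method\<close>

text \<open>On \<open>[\<delta>, \<pi>]\<close> with \<open>\<delta>\<close> a cutoff, \<open>\<bar>symb \<sigma>\<bar>\<close> stays below \<open>symb \<sigma> \<delta> < symb \<sigma> (\<delta>/2)\<close>, so
  powers of \<open>symb \<sigma>\<close> concentrate the integrals \<open>power_integral \<sigma> L\<close> near \<open>\<theta> = 0\<close> (Laplace's method).\<close>

definition laplace_cutoff :: "real \<Rightarrow> real \<Rightarrow> bool" where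
  "laplace_cutoff \<sigma> \<delta> \<longleftrightarrow> 0 < \<delta> \<and> \<delta> \<le> pi / 2 \<and> 1 - \<sigma> \<le> cos \<delta>"

lemma abs_symb_le_cutoff:
  assumes "\<sigma> \<ge> 0" "laplace_cutoff \<sigma> \<delta>" "\<delta> \<le> \<theta>" "\<theta> \<le> pi"
  shows "\<bar>symb \<sigma> \<theta>\<bar> \<le> symb \<sigma> \<delta>"
proof -
  have "cos \<theta> \<le> cos \<delta>" using assms by (intro cos_monotone_0_pi_le) (auto simp: laplace_cutoff_def)
  with assms show ?thesis
    using cos_ge_minus_one[of \<theta>] unfolding symb_def laplace_cutoff_def abs_le_iff by linarith
qed

lemma laplace_cutoff_exists:
  assumes "\<sigma> > 0" "\<epsilon> > 0"
  obtains \<delta> where "laplace_cutoff \<sigma> \<delta>" "\<delta> < \<epsilon>"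
proof -
  obtain d where "d > 0" and d: "\<And>\<theta>::real. dist \<theta> 0 < d \<Longrightarrow> dist (cos \<theta>) (cos 0) < \<sigma>"
    using continuous_at_eps_delta[THEN iffD1, OF isCont_cos[of 0]] assms(1) by blast
  define \<delta> where "\<delta> = min (pi / 2) (min d \<epsilon>) / 2"
  have "0 < \<delta>" "\<delta> < d" "\<delta> < \<epsilon>" "\<delta> \<le> pi / 2"
    unfolding \<delta>_def using \<open>d > 0\<close> assms(2) pi_gt_zero by (auto simp: min_def)
  moreover have "1 - \<sigma> \<le> cos \<delta>"
    using d[of \<delta>] \<open>0 < \<delta>\<close> \<open>\<delta> < d\<close> by (simp add: dist_real_def)
  ultimately show ?thesis using that unfolding laplace_cutoff_def by blast
qed

lemma symb_pos: "\<sigma> > 0 \<Longrightarrow> 0 \<le> \<theta> \<Longrightarrow> \<theta> \<le> pi / 2 \<Longrightarrow> symb \<sigma> \<theta> > 0"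
  unfolding symb_def using cos_ge_zero[of \<theta>] by simp

locale laplace_weight =
  fixes \<sigma> :: real and p :: "real \<Rightarrow> real"
  assumes \<sigma>_pos: "\<sigma> > 0"
    and continuous_p: "continuous_on {0..pi} p"
    and p_nonneg: "\<And>\<theta>. \<theta> \<in> {0..pi} \<Longrightarrow> p \<theta> \<ge> 0"
    and p_pos: "\<And>\<theta>. \<theta> \<in> {0<..<pi} \<Longrightarrow> p \<theta> > 0"
begin

definition head :: "real \<Rightarrow> nat \<Rightarrow> real" where
  "head \<delta> L = integral {0..\<delta>} (\<lambda>\<theta>. symb \<sigma> \<theta> ^ L * p \<theta>)"

definition tail :: "real \<Rightarrow> (real \<Rightarrow> real) \<Rightarrow> nat \<Rightarrow> real" where
  "tail \<delta> h L = integral {\<delta>..pi} (\<lambda>\<theta>. \<bar>symb \<sigma> \<theta>\<bar> ^ L * \<bar>p \<theta> * h \<theta>\<bar>)"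

lemma continuous_on_p_subset: "0 \<le> a \<Longrightarrow> b \<le> pi \<Longrightarrow> continuous_on {a..b} p"
  by (rule continuous_on_subset[OF continuous_p]) auto

lemma head_lower_bound:
  assumes "0 < \<delta>" "\<delta> \<le> pi / 2"
  obtains c where "c > 0" "\<And>L. c * symb \<sigma> (\<delta> / 2) ^ L \<le> head \<delta> L"
proof -
  have cont: "continuous_on {a..b} (\<lambda>\<theta>. symb \<sigma> \<theta> ^ L * p \<theta>)" if "0 \<le> a" "b \<le> pi" for a b L
    using that by (intro continuous_intros continuous_on_p_subset)
  have "\<exists>x\<in>{\<delta> / 4..\<delta> / 2}. \<forall>\<theta>\<in>{\<delta> / 4..\<delta> / 2}. p x \<le> p \<theta>"
    using assms pi_gt_zero by (intro continuous_attains_inf continuous_on_p_subset) auto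
  then obtain x where x: "x \<in> {\<delta> / 4..\<delta> / 2}" and min: "\<forall>\<theta>\<in>{\<delta> / 4..\<delta> / 2}. p x \<le> p \<theta>" ..
  have "p x > 0" using x assms pi_gt_zero by (intro p_pos) auto
  have "\<delta> / 4 * p x * symb \<sigma> (\<delta> / 2) ^ L \<le> head \<delta> L" for L
  proof -
    have "(\<delta> / 2 - \<delta> / 4) * (p x * symb \<sigma> (\<delta> / 2) ^ L) \<le>
        integral {\<delta> / 4..\<delta> / 2} (\<lambda>\<theta>. symb \<sigma> \<theta> ^ L * p \<theta>)"
    proof (rule order.trans[OF _ integral_le[OF integrable_const_ivl integrable_continuous_interval]])
      fix \<theta> assume \<theta>: "\<theta> \<in> {\<delta> / 4..\<delta> / 2}"
      have "symb \<sigma> (\<delta> / 2) \<le> symb \<sigma> \<theta>"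
        using \<theta> assms unfolding symb_def by (auto intro: cos_monotone_0_pi_le)
      moreover have "p x \<le> p \<theta>" using min \<theta> by blast
      ultimately have "p x * symb \<sigma> (\<delta> / 2) ^ L \<le> p \<theta> * symb \<sigma> \<theta> ^ L"
        using \<open>p x > 0\<close> symb_pos[OF \<sigma>_pos, of "\<delta> / 2"] assms
        by (intro mult_mono power_mono) auto
      then show "p x * symb \<sigma> (\<delta> / 2) ^ L \<le> symb \<sigma> \<theta> ^ L * p \<theta>" by (simp only: mult.commute)
    qed (use assms cont in auto)
    also have "\<dots> \<le> head \<delta> L"
    proof (unfold head_def, intro integral_subset_le integrable_continuous_interval cont ballI)
      fix \<theta> assume "\<theta> \<in> {0..\<delta>}"
      then show "0 \<le> symb \<sigma> \<theta> ^ L * p \<theta>"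
        using assms symb_pos[OF \<sigma>_pos, of \<theta>] p_nonneg[of \<theta>] by simp
    qed (use assms in auto)
    finally show ?thesis by (simp add: algebra_simps)
  qed
  then show ?thesis using that[of "\<delta> / 4 * p x"] assms \<open>p x > 0\<close> by simp
qed

lemma head_pos:
  assumes "0 < \<delta>" "\<delta> \<le> pi / 2"
  shows "0 < head \<delta> L"
proof -
  obtain c where "c > 0" and c: "c * symb \<sigma> (\<delta> / 2) ^ L \<le> head \<delta> L"
    using head_lower_bound[OF assms] by blast
  moreover have "0 < symb \<sigma> (\<delta> / 2)" using assms \<sigma>_pos by (intro symb_pos) auto
  ultimately show ?thesis by (smt (verit) zero_less_mult_iff zero_less_power)
qed

lemma tail_bounds:
  assumes "laplace_cutoff \<sigma> \<delta>" "continuous_on {0..pi} h" "\<And>\<theta>. \<theta> \<in> {0..pi} \<Longrightarrow> \<bar>p \<theta> * h \<theta>\<bar> \<le> B"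
  shows "0 \<le> tail \<delta> h L" and "tail \<delta> h L \<le> pi * B * symb \<sigma> \<delta> ^ L"
proof -
  have \<delta>: "0 < \<delta>" "\<delta> \<le> pi / 2" using assms(1) by (auto simp: laplace_cutoff_def)
  have "0 < symb \<sigma> \<delta>" using \<delta> \<sigma>_pos by (auto intro: symb_pos)
  have cont: "continuous_on {\<delta>..pi} (\<lambda>\<theta>. \<bar>symb \<sigma> \<theta>\<bar> ^ L * \<bar>p \<theta> * h \<theta>\<bar>)"
    using \<delta> by (intro continuous_intros continuous_on_subset[OF assms(2)] continuous_on_p_subset) auto
  show "0 \<le> tail \<delta> h L"
    unfolding tail_def using \<delta> by (intro integral_nonneg integrable_continuous_interval cont) auto
  have "tail \<delta> h L \<le> integral {\<delta>..pi} (\<lambda>_. symb \<sigma> \<delta> ^ L * B)"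
    unfolding tail_def
  proof (intro integral_le integrable_continuous_interval cont continuous_intros ballI)
    fix \<theta> assume "\<theta> \<in> {\<delta>..pi}"
    then show "\<bar>symb \<sigma> \<theta>\<bar> ^ L * \<bar>p \<theta> * h \<theta>\<bar> \<le> symb \<sigma> \<delta> ^ L * B"
      using \<delta> assms(1,3) \<sigma>_pos \<open>0 < symb \<sigma> \<delta>\<close>
      by (intro mult_mono power_mono abs_symb_le_cutoff) auto
  qed
  also have "\<dots> \<le> pi * B * symb \<sigma> \<delta> ^ L"
    using \<delta> assms(3)[of 0] \<open>0 < symb \<sigma> \<delta>\<close> by (simp add: mult_right_mono)
  finally show "tail \<delta> h L \<le> pi * B * symb \<sigma> \<delta> ^ L" .
qed

lemma tail_ratio_tendsto_0:
  assumes "laplace_cutoff \<sigma> \<delta>" "continuous_on {0..pi} h"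
  shows "(\<lambda>L. tail \<delta> h L / head \<delta> L) \<longlonglongrightarrow> 0"
proof -
  have \<delta>: "0 < \<delta>" "\<delta> \<le> pi / 2" using assms(1) by (auto simp: laplace_cutoff_def)
  have "bounded ((\<lambda>\<theta>. p \<theta> * h \<theta>) ` {0..pi})"
    using assms(2) continuous_p
    by (intro compact_imp_bounded compact_continuous_image continuous_intros) auto
  then obtain B where "B > 0" and B: "\<And>\<theta>. \<theta> \<in> {0..pi} \<Longrightarrow> \<bar>p \<theta> * h \<theta>\<bar> \<le> B"
    unfolding bounded_pos by auto
  obtain c where "c > 0" and c: "\<And>L. c * symb \<sigma> (\<delta> / 2) ^ L \<le> head \<delta> L"
    using head_lower_bound \<delta> by blast
  define r where "r = symb \<sigma> \<delta> / symb \<sigma> (\<delta> / 2)"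
  have pos: "0 < symb \<sigma> (\<delta> / 2)" "0 < symb \<sigma> \<delta>" using \<delta> \<sigma>_pos by (auto intro: symb_pos)
  moreover have "symb \<sigma> \<delta> < symb \<sigma> (\<delta> / 2)"
    using \<delta> unfolding symb_def by (auto intro: cos_monotone_0_pi)
  ultimately have r: "0 \<le> r" "r < 1" unfolding r_def by auto
  have bound: "norm (tail \<delta> h L / head \<delta> L) \<le> pi * B / c * r ^ L" for L
  proof -
    have "tail \<delta> h L / head \<delta> L \<le> pi * B * symb \<sigma> \<delta> ^ L / (c * symb \<sigma> (\<delta> / 2) ^ L)"
      using tail_bounds[OF assms B] \<open>B > 0\<close> \<open>c > 0\<close> pos c[of L] by (intro frac_le) auto
    then show ?thesis
      using tail_bounds(1)[OF assms B, of L] head_pos[OF \<delta>, of L] \<open>c > 0\<close>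
      unfolding r_def by (simp add: power_divide field_simps)
  qed
  have "(\<lambda>L. pi * B / c * r ^ L) \<longlonglongrightarrow> 0"
    using r by (intro tendsto_mult_right_zero LIMSEQ_power_zero) auto
  then show ?thesis by (rule Lim_null_comparison[OF always_eventually, rotated]) (use bound in blast)
qed

lemma power_integral_near_head:
  assumes "laplace_cutoff \<sigma> \<delta>" "continuous_on {0..pi} h"
  shows "\<bar>power_integral \<sigma> L (\<lambda>\<theta>. p \<theta> * h \<theta>) - integral {0..\<delta>} (\<lambda>\<theta>. symb \<sigma> \<theta> ^ L * (p \<theta> * h \<theta>))\<bar>
    \<le> tail \<delta> h L"
proof -
  let ?f = "\<lambda>\<theta>. symb \<sigma> \<theta> ^ L * (p \<theta> * h \<theta>)"
  have \<delta>: "0 \<le> \<delta>" "\<delta> \<le> pi" using assms(1) pi_gt_zero by (auto simp: laplace_cutoff_def)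
  have "continuous_on {0..pi} ?f" using assms(2) continuous_p by (intro continuous_intros)
  then have "power_integral \<sigma> L (\<lambda>\<theta>. p \<theta> * h \<theta>) = integral {0..\<delta>} ?f + integral {\<delta>..pi} ?f"
    unfolding power_integral_def using \<delta>
    by (simp add: Henstock_Kurzweil_Integration.integral_combine integrable_continuous_interval)
  moreover have "norm (integral {\<delta>..pi} ?f) \<le> tail \<delta> h L"
    unfolding tail_def using \<delta>
    by (intro integral_norm_bound_integral integrable_continuous_interval continuous_intros
        continuous_on_subset[OF assms(2)] continuous_on_p_subset)
      (auto simp: abs_mult power_abs)
  ultimately show ?thesis by simp
qed

lemma head_integral_bound:
  assumes "laplace_cutoff \<sigma> \<delta>" "continuous_on {0..pi} h" "\<And>\<theta>. \<theta> \<in> {0..\<delta>} \<Longrightarrow> \<bar>h \<theta>\<bar> \<le> \<eta>"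
  shows "\<bar>integral {0..\<delta>} (\<lambda>\<theta>. symb \<sigma> \<theta> ^ L * (p \<theta> * h \<theta>))\<bar> \<le> \<eta> * head \<delta> L"
proof -
  have \<delta>: "0 < \<delta>" "\<delta> \<le> pi / 2" using assms(1) by (auto simp: laplace_cutoff_def)
  have "norm (integral {0..\<delta>} (\<lambda>\<theta>. symb \<sigma> \<theta> ^ L * (p \<theta> * h \<theta>))) \<le>
      integral {0..\<delta>} (\<lambda>\<theta>. \<eta> * (symb \<sigma> \<theta> ^ L * p \<theta>))"
  proof (intro integral_norm_bound_integral integrable_continuous_interval continuous_intros
      continuous_on_subset[OF assms(2)] continuous_on_p_subset ballI)
    fix \<theta> assume \<theta>: "\<theta> \<in> {0..\<delta>}"
    then have "0 < symb \<sigma> \<theta>" "0 \<le> p \<theta>" using \<delta> \<sigma>_pos by (auto intro: symb_pos p_nonneg)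
    then have "symb \<sigma> \<theta> ^ L * p \<theta> * \<bar>h \<theta>\<bar> \<le> symb \<sigma> \<theta> ^ L * p \<theta> * \<eta>"
      using assms(3)[OF \<theta>] by (intro mult_left_mono) auto
    then show "norm (symb \<sigma> \<theta> ^ L * (p \<theta> * h \<theta>)) \<le> \<eta> * (symb \<sigma> \<theta> ^ L * p \<theta>)"
      using \<open>0 < symb \<sigma> \<theta>\<close> \<open>0 \<le> p \<theta>\<close> by (simp add: abs_mult ac_simps)
  qed (use \<delta> in auto)
  then show ?thesis unfolding head_def by simp
qed

lemma eventually_head_le_power_integral:
  assumes "laplace_cutoff \<sigma> \<delta>"
  shows "eventually (\<lambda>L. 0 < head \<delta> L \<and> head \<delta> L \<le> 2 * power_integral \<sigma> L p) sequentially"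
proof -
  have head_pos: "0 < head \<delta> L" for L
    using assms by (intro head_pos) (auto simp: laplace_cutoff_def)
  have "eventually (\<lambda>L. tail \<delta> (\<lambda>_. 1) L / head \<delta> L < 1 / 2) sequentially"
    using assms by (intro order_tendstoD(2)[OF tail_ratio_tendsto_0]) auto
  then show ?thesis
  proof eventually_elim
    case (elim L)
    then have "tail \<delta> (\<lambda>_. 1) L \<le> head \<delta> L / 2" using head_pos[of L] by (simp add: divide_less_eq)
    moreover have "\<bar>power_integral \<sigma> L p - head \<delta> L\<bar> \<le> tail \<delta> (\<lambda>_. 1) L"
      using power_integral_near_head[OF assms, of "\<lambda>_. 1" L] by (simp add: head_def)
    ultimately show ?case using head_pos[of L] by linarith
  qed
qed

lemma integral_abs_symb_power_split:
  assumes "laplace_cutoff \<sigma> \<delta>"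
  shows "integral {0..pi} (\<lambda>\<theta>. \<bar>symb \<sigma> \<theta>\<bar> ^ L * p \<theta>) = head \<delta> L + tail \<delta> (\<lambda>_. 1) L"
proof -
  have \<delta>: "0 < \<delta>" "\<delta> \<le> pi / 2" using assms by (auto simp: laplace_cutoff_def)
  have "integral {0..pi} (\<lambda>\<theta>. \<bar>symb \<sigma> \<theta>\<bar> ^ L * p \<theta>) =
      integral {0..\<delta>} (\<lambda>\<theta>. \<bar>symb \<sigma> \<theta>\<bar> ^ L * p \<theta>) + integral {\<delta>..pi} (\<lambda>\<theta>. \<bar>symb \<sigma> \<theta>\<bar> ^ L * p \<theta>)"
    using \<delta> by (intro Henstock_Kurzweil_Integration.integral_combine[symmetric]
        integrable_continuous_interval continuous_intros continuous_p) auto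
  moreover have "integral {0..\<delta>} (\<lambda>\<theta>. \<bar>symb \<sigma> \<theta>\<bar> ^ L * p \<theta>) = head \<delta> L"
    unfolding head_def using \<delta> \<sigma>_pos
    by (intro integral_cong) (auto dest!: symb_pos[of \<sigma>] simp: abs_of_pos)
  moreover have "integral {\<delta>..pi} (\<lambda>\<theta>. \<bar>symb \<sigma> \<theta>\<bar> ^ L * p \<theta>) = tail \<delta> (\<lambda>_. 1) L"
    unfolding tail_def using \<delta> by (intro integral_cong) (auto simp: abs_of_nonneg p_nonneg)
  ultimately show ?thesis by simp
qed

lemma abs_power_integral_le:
  assumes "continuous_on {0..pi} g" "\<And>\<theta>. \<theta> \<in> {0..pi} \<Longrightarrow> \<bar>g \<theta>\<bar> \<le> K"
  shows "\<bar>power_integral \<sigma> L (\<lambda>\<theta>. p \<theta> * g \<theta>)\<bar> \<le> K * integral {0..pi} (\<lambda>\<theta>. \<bar>symb \<sigma> \<theta>\<bar> ^ L * p \<theta>)"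
proof -
  have "norm (power_integral \<sigma> L (\<lambda>\<theta>. p \<theta> * g \<theta>)) \<le>
      integral {0..pi} (\<lambda>\<theta>. K * (\<bar>symb \<sigma> \<theta>\<bar> ^ L * p \<theta>))"
    unfolding power_integral_def
  proof (intro integral_norm_bound_integral integrable_continuous_interval continuous_intros
      continuous_p assms(1) ballI)
    fix \<theta> assume \<theta>: "\<theta> \<in> {0..pi}"
    then have "\<bar>symb \<sigma> \<theta>\<bar> ^ L * p \<theta> * \<bar>g \<theta>\<bar> \<le> \<bar>symb \<sigma> \<theta>\<bar> ^ L * p \<theta> * K"
      using assms(2) p_nonneg by (intro mult_left_mono) auto
    then show "norm (symb \<sigma> \<theta> ^ L * (p \<theta> * g \<theta>)) \<le> K * (\<bar>symb \<sigma> \<theta>\<bar> ^ L * p \<theta>)"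
      using p_nonneg[OF \<theta>] by (simp add: abs_mult power_abs ac_simps)
  qed
  then show ?thesis by simp
qed

lemma power_integral_dominated:
  "eventually (\<lambda>L. 0 < power_integral \<sigma> L p \<and>
     (\<forall>g K. continuous_on {0..pi} g \<longrightarrow> (\<forall>\<theta>\<in>{0..pi}. \<bar>g \<theta>\<bar> \<le> K) \<longrightarrow>
       \<bar>power_integral \<sigma> L (\<lambda>\<theta>. p \<theta> * g \<theta>)\<bar> \<le> 3 * K * power_integral \<sigma> L p)) sequentially"
proof -
  obtain \<delta> where \<delta>: "laplace_cutoff \<sigma> \<delta>" using laplace_cutoff_exists[OF \<sigma>_pos, of 1] by auto
  have "eventually (\<lambda>L. tail \<delta> (\<lambda>_. 1) L / head \<delta> L < 1 / 2) sequentially"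
    using \<delta> by (intro order_tendstoD(2)[OF tail_ratio_tendsto_0]) auto
  with eventually_head_le_power_integral[OF \<delta>] show ?thesis
  proof eventually_elim
    case (elim L)
    then have abs_le: "integral {0..pi} (\<lambda>\<theta>. \<bar>symb \<sigma> \<theta>\<bar> ^ L * p \<theta>) \<le> 3 * power_integral \<sigma> L p"
      unfolding integral_abs_symb_power_split[OF \<delta>] by (simp add: divide_less_eq)
    show ?case
    proof (intro conjI allI impI)
      fix g :: "real \<Rightarrow> real" and K :: real
      assume g: "continuous_on {0..pi} g" "\<forall>\<theta>\<in>{0..pi}. \<bar>g \<theta>\<bar> \<le> K"
      then have "0 \<le> K" using pi_gt_zero by (intro order.trans[OF abs_ge_zero, of "g 0"]) auto
      have "\<bar>power_integral \<sigma> L (\<lambda>\<theta>. p \<theta> * g \<theta>)\<bar> \<le> K * integral {0..pi} (\<lambda>\<theta>. \<bar>symb \<sigma> \<theta>\<bar> ^ L * p \<theta>)"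
        using g by (intro abs_power_integral_le) auto
      also have "\<dots> \<le> K * (3 * power_integral \<sigma> L p)" using abs_le \<open>0 \<le> K\<close> by (rule mult_left_mono)
      finally show "\<bar>power_integral \<sigma> L (\<lambda>\<theta>. p \<theta> * g \<theta>)\<bar> \<le> 3 * K * power_integral \<sigma> L p" by simp
    qed (use elim in linarith)
  qed
qed

lemma power_integral_mult_diff:
  assumes "continuous_on {0..pi} g"
  shows "power_integral \<sigma> L (\<lambda>\<theta>. p \<theta> * (g \<theta> - x)) =
    power_integral \<sigma> L (\<lambda>\<theta>. p \<theta> * g \<theta>) - x * power_integral \<sigma> L p"
proof -
  have int: "(\<lambda>\<theta>. symb \<sigma> \<theta> ^ L * (p \<theta> * g \<theta>)) integrable_on {0..pi}"
      "(\<lambda>\<theta>. x * (symb \<sigma> \<theta> ^ L * p \<theta>)) integrable_on {0..pi}"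
    by (intro integrable_continuous_interval continuous_intros continuous_p assms)+
  have "power_integral \<sigma> L (\<lambda>\<theta>. p \<theta> * (g \<theta> - x)) =
      integral {0..pi} (\<lambda>\<theta>. symb \<sigma> \<theta> ^ L * (p \<theta> * g \<theta>) - x * (symb \<sigma> \<theta> ^ L * p \<theta>))"
    unfolding power_integral_def by (simp add: algebra_simps)
  then show ?thesis unfolding integral_diff[OF int] power_integral_def by simp
qed

lemma power_integral_ratio_tendsto:
  assumes "continuous_on {0..pi} g"
  shows "(\<lambda>L. power_integral \<sigma> L (\<lambda>\<theta>. p \<theta> * g \<theta>) / power_integral \<sigma> L p) \<longlonglongrightarrow> g 0"
proof (rule tendstoI)
  fix \<epsilon> :: real assume "\<epsilon> > 0"
  define h where "h = (\<lambda>\<theta>. g \<theta> - g 0)"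
  have h: "continuous_on {0..pi} h" unfolding h_def using assms by (intro continuous_intros)
  obtain d where "d > 0" and d: "\<And>\<theta>. \<theta> \<in> {0..pi} \<Longrightarrow> dist \<theta> 0 < d \<Longrightarrow> dist (g \<theta>) (g 0) < \<epsilon> / 8"
    using assms[unfolded continuous_on_iff] \<open>\<epsilon> > 0\<close> pi_gt_zero
    by (metis atLeastAtMost_iff divide_pos_pos le_less zero_less_numeral)
  obtain \<delta> where \<delta>: "laplace_cutoff \<sigma> \<delta>" "\<delta> < d" using laplace_cutoff_exists[OF \<sigma>_pos \<open>d > 0\<close>] .
  have "\<bar>h \<theta>\<bar> \<le> \<epsilon> / 8" if "\<theta> \<in> {0..\<delta>}" for \<theta>
    using d[of \<theta>] that \<delta> unfolding laplace_cutoff_def h_def dist_real_def by auto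
  then have head_part: "\<bar>integral {0..\<delta>} (\<lambda>\<theta>. symb \<sigma> \<theta> ^ L * (p \<theta> * h \<theta>))\<bar> \<le> \<epsilon> / 8 * head \<delta> L" for L
    by (rule head_integral_bound[OF \<delta>(1) h])
  have "eventually (\<lambda>L. tail \<delta> h L / head \<delta> L < \<epsilon> / 8) sequentially"
    using \<open>\<epsilon> > 0\<close> by (intro order_tendstoD(2)[OF tail_ratio_tendsto_0[OF \<delta>(1) h]]) auto
  with eventually_head_le_power_integral[OF \<delta>(1)]
  show "eventually (\<lambda>L. dist (power_integral \<sigma> L (\<lambda>\<theta>. p \<theta> * g \<theta>) / power_integral \<sigma> L p) (g 0) < \<epsilon>)
      sequentially"
  proof eventually_elim
    case (elim L)
    have "\<bar>power_integral \<sigma> L (\<lambda>\<theta>. p \<theta> * g \<theta>) - g 0 * power_integral \<sigma> L p\<bar> \<le>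
        \<epsilon> / 8 * head \<delta> L + tail \<delta> h L"
      using power_integral_near_head[OF \<delta>(1) h, of L] head_part[of L]
      unfolding h_def power_integral_mult_diff[OF assms] by linarith
    also have "\<dots> \<le> \<epsilon> / 4 * head \<delta> L" using elim by (simp add: divide_less_eq)
    also have "\<dots> \<le> \<epsilon> / 4 * (2 * power_integral \<sigma> L p)"
      using elim \<open>\<epsilon> > 0\<close> by (intro mult_left_mono) auto
    also have "\<dots> < \<epsilon> * power_integral \<sigma> L p"
      using elim \<open>\<epsilon> > 0\<close> by simp
    finally have "\<bar>power_integral \<sigma> L (\<lambda>\<theta>. p \<theta> * g \<theta>) - g 0 * power_integral \<sigma> L p\<bar>
        < \<epsilon> * power_integral \<sigma> L p" .
    then show ?case
      using elim by (simp add: dist_real_def divide_simps abs_divide)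
  qed
qed

lemma power_integral_Suc_ratio_tendsto:
  "(\<lambda>L. power_integral \<sigma> (Suc L) p / power_integral \<sigma> L p) \<longlonglongrightarrow> \<sigma> + 2"
proof -
  have "power_integral \<sigma> (Suc L) p = power_integral \<sigma> L (\<lambda>\<theta>. p \<theta> * symb \<sigma> \<theta>)" for L
    unfolding power_integral_def by (simp add: ac_simps)
  moreover have "(\<lambda>L. power_integral \<sigma> L (\<lambda>\<theta>. p \<theta> * symb \<sigma> \<theta>) / power_integral \<sigma> L p)
      \<longlonglongrightarrow> symb \<sigma> 0"
    by (intro power_integral_ratio_tendsto continuous_intros)
  ultimately show ?thesis by (simp add: symb_def)
qed

end

section \<open>Boundary weights at and below the critical value\<close>

lemma laplace_weight_one_plus_cos: "\<sigma> > 0 \<Longrightarrow> laplace_weight \<sigma> (\<lambda>\<theta>. 1 + cos \<theta>)"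
proof
  show "continuous_on {0..pi} (\<lambda>\<theta>. 1 + cos \<theta>)" by (intro continuous_intros)
  show "0 \<le> 1 + cos \<theta>" for \<theta> :: real using cos_ge_minus_one[of \<theta>] by linarith
  show "0 < 1 + cos \<theta>" if "\<theta> \<in> {0<..<pi}" for \<theta>
    using cos_monotone_0_pi[of \<theta> pi] that by auto
qed

lemma laplace_weight_sin_square: "\<sigma> > 0 \<Longrightarrow> laplace_weight \<sigma> (\<lambda>\<theta>. sin \<theta> ^ 2)"
proof
  show "continuous_on {0..pi} (\<lambda>\<theta>. sin \<theta> ^ 2)" by (intro continuous_intros)
  show "0 < sin \<theta> ^ 2" if "\<theta> \<in> {0<..<pi}" for \<theta> using sin_gt_zero[of \<theta>] that by simp
qed auto

lemma eigvec_asymptotics_critical: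
  assumes "\<sigma> > 0"
  shows "eigvec_asymptotics \<sigma> (\<lambda>_. 1) 1"
proof -
  interpret laplace_weight \<sigma> "\<lambda>\<theta>. 1 + cos \<theta>"
    using assms by (rule laplace_weight_one_plus_cos)
  define c where "c = (\<lambda>L. power_integral \<sigma> L (\<lambda>\<theta>. 1 + cos \<theta>))"
  have W: "transfer_pow \<sigma> (\<lambda>_. 1) L n / c L =
      1 / pi * (power_integral \<sigma> L (\<lambda>\<theta>. (1 + cos \<theta>) * chebU n \<theta>) / c L)" for L n
    unfolding transfer_pow_one_repr c_def by simp
  show ?thesis
    unfolding eigvec_asymptotics_def
  proof (intro exI conjI allI)
    show "eventually (\<lambda>L. 0 < c L) sequentially"
      unfolding c_def using power_integral_dominated by (rule eventually_mono) simp
    show "(\<lambda>L. c (Suc L) / c L) \<longlonglongrightarrow> 1 + 1 / 1 + \<sigma>"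
      unfolding c_def using power_integral_Suc_ratio_tendsto by (simp add: add.commute)
    show "(\<lambda>L. transfer_pow \<sigma> (\<lambda>_. 1) L n / c L) \<longlonglongrightarrow> 1 / pi * eigvec 1 n" for n
    proof -
      have "(\<lambda>L. power_integral \<sigma> L (\<lambda>\<theta>. (1 + cos \<theta>) * chebU n \<theta>) / c L) \<longlonglongrightarrow> real n + 1"
        unfolding c_def using power_integral_ratio_tendsto[of "chebU n"]
        by (simp add: chebU_0 continuous_intros)
      then show ?thesis unfolding W eigvec_one by (rule tendsto_mult_left)
    qed
    show "eventually (\<lambda>L. \<forall>n. \<bar>transfer_pow \<sigma> (\<lambda>_. 1) L n / c L\<bar> \<le> 3 / pi * eigvec 1 n) sequentially"
      using power_integral_dominated
    proof eventually_elim
      case (elim L)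
      show ?case
      proof
        fix n
        have "\<bar>power_integral \<sigma> L (\<lambda>\<theta>. (1 + cos \<theta>) * chebU n \<theta>)\<bar> \<le> 3 * (real n + 1) * c L"
          using elim[THEN conjunct2, rule_format, of "chebU n" "real n + 1"]
          unfolding c_def by (simp add: abs_chebU_le continuous_on_chebU)
        moreover have "0 < c L" using elim unfolding c_def by simp
        ultimately show "\<bar>transfer_pow \<sigma> (\<lambda>_. 1) L n / c L\<bar> \<le> 3 / pi * eigvec 1 n"
          unfolding W eigvec_one by (simp add: abs_mult abs_divide divide_simps)
      qed
    qed
  qed (simp add: pi_gt_zero)
qed

lemma transfer_pow_geometric_sums:
  "(\<lambda>m. r ^ m * transfer_pow \<sigma> (\<lambda>k. if k = m then 1 else 0) L n) sums transfer_pow \<sigma> (\<lambda>n. r ^ n) L n"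
proof -
  have "(\<lambda>m. if n = m then r ^ m else 0) sums r ^ n" for n
    using sums_single[of n "\<lambda>m. r ^ m"] by (simp add: eq_commute)
  then have "(\<lambda>m. transfer_pow \<sigma> (\<lambda>k. r ^ m * (if k = m then 1 else 0)) L n) sums
      transfer_pow \<sigma> (\<lambda>n. r ^ n) L n"
    by (intro transfer_pow_sums) (simp add: if_distrib cong: if_cong)
  then show ?thesis by (simp only: transfer_pow_cmult)
qed

lemma linear_geometric_sums:
  assumes "0 \<le> r" "r < 1"
  shows "(\<lambda>m. r ^ m * (real m + 1)) sums (1 / ((1 - r) * (1 - r)))"
  using eigvec_gf_sums[of r 1] assms by (simp add: eigvec_one)

lemma abs_suminf_geometric_le:
  assumes "0 \<le> r" "r < 1" "\<And>m. \<bar>t m\<bar> \<le> C * (real m + 1)"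
  shows "\<bar>\<Sum>m. r ^ m * t m\<bar> \<le> C / ((1 - r) * (1 - r))"
proof -
  have bound: "norm (r ^ m * t m) \<le> C * (r ^ m * (real m + 1))" for m
    using mult_left_mono[OF assms(3), of "r ^ m"] assms(1) by (simp add: abs_mult mult_ac)
  have sums: "(\<lambda>m. C * (r ^ m * (real m + 1))) sums (C * (1 / ((1 - r) * (1 - r))))"
    using assms by (intro sums_mult linear_geometric_sums)
  then have "norm (\<Sum>m. r ^ m * t m) \<le> (\<Sum>m. C * (r ^ m * (real m + 1)))"
    by (intro norm_suminf_le bound) (simp add: sums_iff)
  also have "\<dots> = C / ((1 - r) * (1 - r))" using sums by (simp add: sums_iff)
  finally show ?thesis by simp
qed

lemma suminf_geometric_tendsto:
  assumes "0 \<le> r" "r < 1"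
    and lim: "\<And>m. (\<lambda>L. T L m) \<longlonglongrightarrow> \<kappa> * (real m + 1)"
    and dom: "eventually (\<lambda>L. \<forall>m. \<bar>T L m\<bar> \<le> C * (real m + 1)) sequentially"
  shows "(\<lambda>L. \<Sum>m. r ^ m * T L m) \<longlonglongrightarrow> \<kappa> / ((1 - r) * (1 - r))"
proof -
  have "(\<lambda>L. \<Sum>m. r ^ m * T L m) \<longlonglongrightarrow> (\<Sum>m. \<kappa> * (r ^ m * (real m + 1)))"
  proof (rule tendsto_suminf_dominated)
    show "(\<lambda>L. r ^ m * T L m) \<longlonglongrightarrow> \<kappa> * (r ^ m * (real m + 1))" for m
      using tendsto_mult_left[OF lim, of "r ^ m"] by (simp add: mult_ac)
    show "eventually (\<lambda>L. \<forall>m. \<bar>r ^ m * T L m\<bar> \<le> C * (r ^ m * (real m + 1))) sequentially"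
      using dom
    proof eventually_elim
      case (elim L)
      show ?case using mult_left_mono[OF elim[rule_format], of "r ^ _"] assms(1)
        by (simp add: abs_mult mult_ac)
    qed
    show "summable (\<lambda>m. C * (r ^ m * (real m + 1)))"
      using linear_geometric_sums[OF assms(1,2)] by (intro summable_mult) (simp add: sums_iff)
  qed
  moreover have "(\<Sum>m. \<kappa> * (r ^ m * (real m + 1))) = \<kappa> / ((1 - r) * (1 - r))"
    using sums_mult[OF linear_geometric_sums[OF assms(1,2)], of \<kappa>] by (simp add: sums_iff)
  ultimately show ?thesis by simp
qed

lemma eigvec_asymptotics_geometric_superposition:
  assumes "0 \<le> r" "r < 1" "\<kappa> > 0"
    and cpos: "eventually (\<lambda>L. c L > 0) sequentially"
    and clim: "(\<lambda>L. c (Suc L) / c L) \<longlonglongrightarrow> 1 + 1 / 1 + \<sigma>"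
    and lim: "\<And>n m. (\<lambda>L. transfer_pow \<sigma> (\<lambda>k. if k = m then 1 else 0) L n / c L)
      \<longlonglongrightarrow> \<kappa> * ((real n + 1) * (real m + 1))"
    and dom: "eventually (\<lambda>L. \<forall>n m. \<bar>transfer_pow \<sigma> (\<lambda>k. if k = m then 1 else 0) L n / c L\<bar> \<le>
      C * ((real n + 1) * (real m + 1))) sequentially"
  shows "eigvec_asymptotics \<sigma> (\<lambda>n. r ^ n) 1"
proof -
  define T where "T = (\<lambda>L n m. transfer_pow \<sigma> (\<lambda>k. if k = m then 1 else 0) L n / c L)"
  define H where "H = 1 / ((1 - r) * (1 - r))"
  have W_eq: "transfer_pow \<sigma> (\<lambda>n. r ^ n) L n / c L = (\<Sum>m. r ^ m * T L n m)" for L n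
    using sums_divide[OF transfer_pow_geometric_sums, of r \<sigma> L n "c L"]
    unfolding T_def by (simp add: sums_iff)
  have T_dom: "eventually (\<lambda>L. \<forall>n m. \<bar>T L n m\<bar> \<le> C * (real n + 1) * (real m + 1)) sequentially"
    using dom unfolding T_def by (simp add: mult.assoc)
  show ?thesis
    unfolding eigvec_asymptotics_def
  proof (intro exI conjI allI)
    show "(\<lambda>L. transfer_pow \<sigma> (\<lambda>n. r ^ n) L n / c L) \<longlonglongrightarrow> \<kappa> * H * eigvec 1 n" for n
    proof -
      have "(\<lambda>L. \<Sum>m. r ^ m * T L n m) \<longlonglongrightarrow> \<kappa> * (real n + 1) / ((1 - r) * (1 - r))"
        using assms(1,2) lim T_dom unfolding T_def
        by (intro suminf_geometric_tendsto[where C = "C * (real n + 1)"])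
          (auto simp: mult.assoc elim: eventually_mono)
      then show ?thesis unfolding W_eq eigvec_one H_def by (simp add: mult_ac)
    qed
    show "eventually (\<lambda>L. \<forall>n. \<bar>transfer_pow \<sigma> (\<lambda>n. r ^ n) L n / c L\<bar> \<le> C * H * eigvec 1 n)
        sequentially"
      using T_dom
    proof (eventually_elim, intro allI)
      fix L n
      assume "\<forall>n m. \<bar>T L n m\<bar> \<le> C * (real n + 1) * (real m + 1)"
      then have "\<bar>\<Sum>m. r ^ m * T L n m\<bar> \<le> C * (real n + 1) / ((1 - r) * (1 - r))"
        using assms(1,2) by (intro abs_suminf_geometric_le) auto
      then show "\<bar>transfer_pow \<sigma> (\<lambda>n. r ^ n) L n / c L\<bar> \<le> C * H * eigvec 1 n"
        unfolding W_eq eigvec_one H_def by simp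
    qed
  qed (use assms cpos clim in \<open>simp_all add: H_def\<close>)
qed

lemma eigvec_asymptotics_subcritical:
  assumes "\<sigma> > 0" "0 \<le> r" "r < 1"
  shows "eigvec_asymptotics \<sigma> (\<lambda>n. r ^ n) 1"
proof -
  interpret laplace_weight \<sigma> "\<lambda>\<theta>. sin \<theta> ^ 2"
    using assms(1) by (rule laplace_weight_sin_square)
  define c where "c = (\<lambda>L. power_integral \<sigma> L (\<lambda>\<theta>. sin \<theta> ^ 2))"
  have T_eq: "transfer_pow \<sigma> (\<lambda>k. if k = m then 1 else 0) L n / c L =
      2 / pi * (power_integral \<sigma> L (\<lambda>\<theta>. sin \<theta> ^ 2 * (chebU n \<theta> * chebU m \<theta>)) / c L)" for L n m
    unfolding transfer_pow_indicator_repr by simp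
  have bound: "\<bar>chebU n \<theta> * chebU m \<theta>\<bar> \<le> (real n + 1) * (real m + 1)" for n m \<theta>
    unfolding abs_mult by (intro mult_mono abs_chebU_le) auto
  show ?thesis
  proof (rule eigvec_asymptotics_geometric_superposition[where \<kappa> = "2 / pi" and C = "6 / pi"])
    show "(\<lambda>L. transfer_pow \<sigma> (\<lambda>k. if k = m then 1 else 0) L n / c L)
        \<longlonglongrightarrow> 2 / pi * ((real n + 1) * (real m + 1))" for n m
      unfolding T_eq unfolding c_def using power_integral_ratio_tendsto[of "\<lambda>\<theta>. chebU n \<theta> * chebU m \<theta>"]
      by (intro tendsto_mult_left) (simp add: chebU_0 continuous_intros)
    show "eventually (\<lambda>L. \<forall>n m. \<bar>transfer_pow \<sigma> (\<lambda>k. if k = m then 1 else 0) L n / c L\<bar> \<le>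
        6 / pi * ((real n + 1) * (real m + 1))) sequentially"
      using power_integral_dominated
    proof eventually_elim
      case (elim L)
      then have "0 < c L" unfolding c_def by simp
      show ?case
      proof (intro allI)
        fix n m
        have "\<bar>power_integral \<sigma> L (\<lambda>\<theta>. sin \<theta> ^ 2 * (chebU n \<theta> * chebU m \<theta>))\<bar> \<le>
            3 * ((real n + 1) * (real m + 1)) * c L"
          using elim[THEN conjunct2, rule_format, of "\<lambda>\<theta>. chebU n \<theta> * chebU m \<theta>"] bound
          unfolding c_def by (simp add: continuous_intros)
        with \<open>0 < c L\<close> have "2 / pi * (\<bar>power_integral \<sigma> L (\<lambda>\<theta>. sin \<theta> ^ 2 * (chebU n \<theta> * chebU m \<theta>))\<bar>
            / c L) \<le> 2 / pi * (3 * ((real n + 1) * (real m + 1)))"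
          by (intro mult_left_mono) (simp_all add: pos_divide_le_eq)
        with \<open>0 < c L\<close> show "\<bar>transfer_pow \<sigma> (\<lambda>k. if k = m then 1 else 0) L n / c L\<bar> \<le>
            6 / pi * ((real n + 1) * (real m + 1))"
          unfolding T_eq by (simp add: abs_mult)
      qed
    qed
    show "eventually (\<lambda>L. 0 < c L) sequentially"
      unfolding c_def using power_integral_dominated by (rule eventually_mono) simp
    show "(\<lambda>L. c (Suc L) / c L) \<longlonglongrightarrow> 1 + 1 / 1 + \<sigma>"
      unfolding c_def using power_integral_Suc_ratio_tendsto by (simp add: add.commute)
  qed (use assms in auto)
qed

theorem corollary1p3:
  fixes \<sigma> \<rho>0 \<rho>1 :: real
  assumes "\<sigma> > 0" and "0 < \<rho>0" and "\<rho>0 < 1" and "\<rho>1 > 0" and "\<rho>0 * \<rho>1 < 1"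
  shows "\<forall>(K::nat) (ns::nat \<Rightarrow> nat).
    (\<lambda>L. PrL \<sigma> (\<lambda>n. \<rho>0 ^ n) (\<lambda>n. \<rho>1 ^ n) L {g. \<forall>k\<le>K. gam g k = ns k})
    \<longlonglongrightarrow>
    sum_geom_law (\<rho>0 * max 1 \<rho>1) (\<rho>0 / max 1 \<rho>1) (ns 0) *
      (\<Prod>i<K. Qker \<sigma> (max 1 \<rho>1) (ns i) (ns (Suc i)))"
proof (intro allI)
  fix K :: nat and ns :: "nat \<Rightarrow> nat"
  have "eigvec_asymptotics \<sigma> (\<lambda>n. \<rho>1 ^ n) (max 1 \<rho>1)"
  proof -
    consider "\<rho>1 > 1" | "\<rho>1 = 1" | "\<rho>1 < 1" by linarith
    then show ?thesis
    proof cases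
      case 1
      then show ?thesis using eigvec_asymptotics_supercritical[of \<sigma> \<rho>1] assms by simp
    next
      case 2
      then show ?thesis using eigvec_asymptotics_critical[OF assms(1)] by simp
    next
      case 3
      then show ?thesis using eigvec_asymptotics_subcritical[of \<sigma> \<rho>1] assms by simp
    qed
  qed
  moreover have "\<rho>0 * max 1 \<rho>1 < 1" using assms by (simp add: max_def)
  ultimately show "(\<lambda>L. PrL \<sigma> (\<lambda>n. \<rho>0 ^ n) (\<lambda>n. \<rho>1 ^ n) L {g. \<forall>k\<le>K. gam g k = ns k}) \<longlonglongrightarrow>
      sum_geom_law (\<rho>0 * max 1 \<rho>1) (\<rho>0 / max 1 \<rho>1) (ns 0) *
      (\<Prod>i<K. Qker \<sigma> (max 1 \<rho>1) (ns i) (ns (Suc i)))"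
    using assms by (intro prefix_prob_tendsto) auto
qed

end
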